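(* Consider the noiseless least squares deterministic dynamics under AdaGrad-Norm described in the context. Let $K$ have a spectrum that converges as $d\to\infty$ to the power law measure $\rho(\lambda)=(1-\beta)\lambda^{-\beta}\mathbf 1_{(0,1)}(\lambda)$ for some $\beta<1$, and suppose $D_i^2(0)\sim\lambda_i^{-\delta}$ for some $\delta\ge0$. Then: (i) if $\beta+\delta<1$, there exists $\tilde\gamma>0$ with $\gamma_t\ge\tilde\gamma$, and $R(t)\asymp_{\delta,\beta}t^{\beta+\delta-2}$ for all $t\ge1$; (ii) if $1<\beta+\delta<2$, then $\gamma_t\asymp_{\delta,\beta}t^{-1+\frac1{\beta+\delta}}$ and $R(t)\asymp_{\delta,\beta}t^{-\frac{2}{\beta+\delta}+1}$ for all $t\ge1$; (iii) if $\beta+\delta=1$, then $\gamma_t\asymp_{\delta,\beta}\frac{1}{\log(t+1)}$ and $R(t)\asymp_{\delta,\beta}\big(\frac{t}{\log(t+1)}\big)^{-1}$ for all $t\ge1$.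
   Context: Noiseless least squares: $\mathcal R(X)=\frac12(X-X^\star)^TK(X-X^\star)$, $K$ with eigenpairs $(\lambda_i,\omega_i)$. Deterministic dynamics: $D_i^2(0)=d\langle X_0-X^\star,\omega_i\rangle^2$, $\frac{d}{dt}D_i^2(t)=-2\gamma_t\lambda_iD_i^2(t)+2\gamma_t^2\lambda_iR(t)$, $R(t)=\frac1{2d}\sum_i\lambda_iD_i^2(t)$, with AdaGrad-Norm learning rate $\gamma_t=\eta\big/\sqrt{b^2+\frac{2\mathrm{Tr}(K)}{d}\int_0^tR(s)\,ds}$, $b,\eta>0$. Notation: $f\asymp_{\delta,\beta}g$ means $c\,g\le f\le C\,g$ with constants $c,C>0$ depending on $\delta,\beta$. *)

theory Defs
  imports "HOL-Analysis.Analysis"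
begin

definition pl_density :: "real \<Rightarrow> real \<Rightarrow> real" where
  "pl_density \<beta> l = (if 0 < l \<and> l < 1 then (1 - \<beta>) * l powr (- \<beta>) else 0)"

text \<open>Limit of Tr(K)/d: the first moment of the spectral measure.\<close>
definition pl_mean :: "real \<Rightarrow> real" where
  "pl_mean \<beta> = (1 - \<beta>) / (2 - \<beta>)"

text \<open>Deterministic AdaGrad-Norm dynamics for noiseless least squares in the
  limit d to infinity: D l t plays the role of D_i^2(t) for eigenvalue l,
  R is the risk, gam the AdaGrad-Norm learning rate.\<close>
definition adagrad_norm_ls_dynamics ::
  "real \<Rightarrow> real \<Rightarrow> real \<Rightarrow> (real \<Rightarrow> real \<Rightarrow> real) \<Rightarrow> (real \<Rightarrow> real) \<Rightarrow> (real \<Rightarrow> real) \<Rightarrow> bool"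
where
  "adagrad_norm_ls_dynamics \<beta> b \<eta> D R gam \<longleftrightarrow>
     continuous_on {0..} R \<and>
     (\<forall>t\<ge>0. gam t = \<eta> / sqrt (b\<^sup>2 + 2 * pl_mean \<beta> * integral {0..t} R)) \<and>
     (\<forall>t\<ge>0. ((\<lambda>l. l * D l t * pl_density \<beta> l) has_integral (2 * R t)) {0<..<1}) \<and>
     (\<forall>l\<in>{0<..<1}. \<forall>t\<ge>0.
        ((\<lambda>s. D l s) has_real_derivative
           (- 2 * gam t * l * D l t + 2 * (gam t)\<^sup>2 * l * R t)) (at t within {0..}))"

definition asymp_ge1 :: "(real \<Rightarrow> real) \<Rightarrow> (real \<Rightarrow> real) \<Rightarrow> bool" where
  "asymp_ge1 f g \<longleftrightarrow> (\<exists>c C. 0 < c \<and> 0 < C \<and> (\<forall>t\<ge>1. c * g t \<le> f t \<and> f t \<le> C * g t))"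

end

theory Submission
  imports Defs
begin

text \<open>Let \<Gamma> be the integrated learning rate and w = 1 + 2 \<Gamma>. By Duhamel's formula the mode at
  eigenvalue l is its initial value damped by exp (-2 l \<Gamma>) plus a nonnegative source term driven
  by gam^2 R. Integrated against the spectral density, the damped initial data alone give
  R \<ge> c w^-(2 - \<beta> - \<delta>). Conversely, once gam has dropped below the critical value 2 / c0
  (c0 = Tr K / d), a bootstrap on the source term gives R \<le> C w^-(2 - \<beta> - \<delta>).
  Since gam = \<eta> / Q with Q' = c0 R / Q and w' = 2 gam, we get dQ / dw = c0 R / (2 \<eta>), so Q stays
  bounded, grows like w^(\<beta> + \<delta> - 1), or grows like ln w according as \<beta> + \<delta> < 1, > 1 or = 1;
  integrating dw / dt = 2 \<eta> / Q then gives the growth of w, hence of gam and R, in t.\<close>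

section \<open>Power-exponential integrals on the unit interval\<close>

lemma powr_has_integral_unit_interval:
  assumes "r > -1"
  shows "((\<lambda>l. l powr r) has_integral 1 / (r + 1)) {0<..<1::real}"
  using has_integral_powr_from_0[OF assms, of 1] by (simp add: has_integral_Icc_iff_Ioo)

lemma powr_exp_integrable_unit_interval:
  assumes "r > -1" "k \<ge> 0"
  shows "(\<lambda>l. l powr r * exp (- (k * l))) integrable_on {0<..<1::real}"
proof -
  let ?f = "\<lambda>l. l powr r * exp (- (k * l))"
  have "?f \<in> borel_measurable (lebesgue_on {0<..<1})"
    by (intro continuous_imp_measurable_on_sets_lebesgue continuous_intros) auto
  moreover have "(\<lambda>l. l powr r) integrable_on {0<..<1}"
    using powr_has_integral_unit_interval[OF assms(1)] by blast
  moreover have "norm (?f l) \<le> l powr r" if "l \<in> {0<..<1}" for l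
    using that assms by (simp add: abs_mult mult_left_le)
  ultimately have "?f absolutely_integrable_on {0<..<1}"
    by (intro measurable_bounded_by_integrable_imp_absolutely_integrable[where g="\<lambda>l. l powr r"]) auto
  then show ?thesis
    using set_lebesgue_integral_eq_integral(1) by blast
qed

lemma powr_exp_integral_le_inverse:
  assumes "r > -1" "k \<ge> 0"
  shows "integral {0<..<1::real} (\<lambda>l. l powr r * exp (- (k * l))) \<le> 1 / (r + 1)"
proof -
  have "integral {0<..<1} (\<lambda>l. l powr r * exp (- (k * l))) \<le> integral {0<..<1} (\<lambda>l. l powr r)"
    using powr_has_integral_unit_interval[OF assms(1)] assms
    by (intro integral_le powr_exp_integrable_unit_interval) (auto simp: mult_left_le)
  then show ?thesis
    using powr_has_integral_unit_interval[OF assms(1)] by (simp add: integral_unique)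
qed

lemma powr_exp_integral_le_Gamma:
  assumes "r > -1" "M > 0"
  shows "integral {0<..<1::real} (\<lambda>l. l powr r * exp (- (M * l))) \<le> M powr (- (r + 1)) * Gamma (r + 1)"
proof -
  define g where "g = (\<lambda>t::real. t powr r / exp t)"
  have g_Gamma: "(g has_integral Gamma (r + 1)) {0..}"
    using Gamma_integral_real[of "r + 1"] assms by (simp add: g_def)
  have g_int: "g integrable_on {0..M}"
    using g_Gamma integrable_on_subinterval[of g "{0..}" 0 M] by (auto simp: integrable_on_def)
  have g_le: "integral {0..M} g \<le> Gamma (r + 1)"
    by (rule has_integral_subset_le[OF _ integrable_integral[OF g_int] g_Gamma]) (auto simp: g_def)
  have "(\<lambda>x. x / M) ` {0..M} = {0..1}"
    using assms by fastforce
  then have "((\<lambda>x. g (M * x)) has_integral (1 / M) * integral {0..M} g) {0..1}"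
    using has_integral_stretch_real[OF integrable_integral[OF g_int], of M] assms by simp
  then have "((\<lambda>x. M powr r * (x powr r * exp (- (M * x)))) has_integral (1 / M) * integral {0..M} g) {0..1}"
    by (rule has_integral_eq[rotated]) (use assms in \<open>simp add: g_def powr_mult exp_minus field_simps\<close>)
  then have "((\<lambda>x. M powr (- r) * (M powr r * (x powr r * exp (- (M * x)))))
      has_integral M powr (- r) * ((1 / M) * integral {0..M} g)) {0<..<1}"
    by (intro has_integral_mult_right) (simp add: has_integral_Icc_iff_Ioo)
  moreover have "M powr (- r) * (M powr r * y) = y" for y
    using assms by (simp add: powr_minus field_simps)
  moreover have "M powr (- r) * ((1 / M) * y) = M powr (- (r + 1)) * y" for y
    using assms by (simp add: powr_diff powr_minus field_simps)
  ultimately have "integral {0<..<1} (\<lambda>x. x powr r * exp (- (M * x))) = M powr (- (r + 1)) * integral {0..M} g"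
    by (simp add: integral_unique)
  also have "\<dots> \<le> M powr (- (r + 1)) * Gamma (r + 1)"
    using g_le by (intro mult_left_mono) auto
  finally show ?thesis .
qed

lemma powr_exp_integral_lower:
  assumes "r > -1" "k \<ge> 0"
  shows "exp (-1) * (1 + k) powr (- (r + 1)) / (r + 1)
    \<le> integral {0<..<1::real} (\<lambda>l. l powr r * exp (- (k * l)))"
proof -
  define u where "u = 1 / (1 + k)"
  have u: "0 < u" "u \<le> 1"
    using assms by (auto simp: u_def)
  have "((\<lambda>l. exp (-1) * l powr r) has_integral exp (-1) * (u powr (r + 1) / (r + 1))) {0<..<u}"
    using has_integral_mult_right[OF has_integral_powr_from_0[OF assms(1), of u]] u
    by (simp add: has_integral_Icc_iff_Ioo)
  then have "((\<lambda>l. if l \<in> {0<..<u} then exp (-1) * l powr r else 0)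
      has_integral exp (-1) * (u powr (r + 1) / (r + 1))) {0<..<1}"
    using u by (subst has_integral_restrict) auto
  then have "exp (-1) * (u powr (r + 1) / (r + 1)) \<le> integral {0<..<1} (\<lambda>l. l powr r * exp (- (k * l)))"
  proof (rule has_integral_le[OF _ integrable_integral[OF powr_exp_integrable_unit_interval[OF assms]]])
    fix l :: real
    assume l: "l \<in> {0<..<1}"
    have "exp (-1) \<le> exp (- (k * l))" if "l < u"
    proof -
      have "k * l \<le> k * u"
        using that assms by (intro mult_left_mono) auto
      also have "k * u \<le> 1"
        using assms by (simp add: u_def field_simps)
      finally show ?thesis by simp
    qed
    then show "(if l \<in> {0<..<u} then exp (-1) * l powr r else 0) \<le> l powr r * exp (- (k * l))"
      using l by (auto simp: mult.commute mult_left_mono)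
  qed
  moreover have "u powr (r + 1) = 1 / (1 + k) powr (r + 1)"
    using assms by (simp add: u_def powr_divide)
  moreover have "\<dots> = (1 + k) powr (- (r + 1))"
    by (rule powr_minus_divide[symmetric])
  ultimately show ?thesis by simp
qed

text \<open>For k \<le> 1 the integral below is at most 1 / (r + 1); for k > 1 the substitution
  x = (1 + k) l / 2 bounds it by Euler's integral for Gamma (r + 1).\<close>
definition powr_exp_bound :: "real \<Rightarrow> real" where
  "powr_exp_bound r = 2 powr (r + 1) * (Gamma (r + 1) + 1 / (r + 1))"

lemma powr_exp_bound_pos:
  assumes "r > -1"
  shows "powr_exp_bound r > 0"
proof -
  have "Gamma (r + 1) > 0"
    by (rule Gamma_real_pos) (use assms in simp)
  then show ?thesis
    unfolding powr_exp_bound_def using assms by (intro mult_pos_pos add_pos_pos) auto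
qed

lemma powr_exp_integral_upper:
  assumes "r > -1" "k \<ge> 0"
  shows "integral {0<..<1::real} (\<lambda>l. l powr r * exp (- (k * l))) \<le> powr_exp_bound r * (1 + k) powr (- (r + 1))"
proof (cases "k \<le> 1")
  case True
  have "(1::real) = 2 powr ((r + 1) + - (r + 1))"
    by simp
  also have "\<dots> = 2 powr (r + 1) * 2 powr (- (r + 1))"
    by (rule powr_add)
  also have "\<dots> \<le> 2 powr (r + 1) * (1 + k) powr (- (r + 1))"
    using True assms by (intro mult_left_mono powr_mono2') auto
  finally have "1 / (r + 1) \<le> 2 powr (r + 1) * (1 + k) powr (- (r + 1)) / (r + 1)"
    using assms by (intro divide_right_mono) auto
  also have "\<dots> \<le> powr_exp_bound r * (1 + k) powr (- (r + 1))"
    using assms Gamma_real_pos[of "r + 1"] by (simp add: powr_exp_bound_def algebra_simps)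
  finally show ?thesis
    using powr_exp_integral_le_inverse[OF assms] by linarith
next
  case False
  define M where "M = (1 + k) / 2"
  have M: "M > 0" "M \<le> k"
    using False by (auto simp: M_def)
  have "integral {0<..<1} (\<lambda>l. l powr r * exp (- (k * l))) \<le> integral {0<..<1} (\<lambda>l. l powr r * exp (- (M * l)))"
    using M assms by (intro integral_le powr_exp_integrable_unit_interval mult_left_mono) auto
  also have "\<dots> \<le> M powr (- (r + 1)) * Gamma (r + 1)"
    by (rule powr_exp_integral_le_Gamma[OF assms(1) M(1)])
  also have "M powr (- (r + 1)) = (1 + k) powr (- (r + 1)) / 2 powr (- (r + 1))"
    using assms by (simp add: M_def powr_divide)
  also have "\<dots> = 2 powr (r + 1) * (1 + k) powr (- (r + 1))"
    using powr_minus[of "2::real" "r + 1"] by (simp add: divide_inverse)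
  also have "2 powr (r + 1) * (1 + k) powr (- (r + 1)) * Gamma (r + 1) \<le> powr_exp_bound r * (1 + k) powr (- (r + 1))"
    using assms by (simp add: powr_exp_bound_def algebra_simps)
  finally show ?thesis .
qed

lemma fundamental_theorem_of_calculus_real:
  assumes "a \<le> b" "\<And>x. x \<in> {a..b} \<Longrightarrow> (f has_real_derivative f' x) (at x within {a..b})"
  shows "(f' has_integral (f b - f a)) {a..b}"
  using assms
  by (intro fundamental_theorem_of_calculus) (auto simp: has_real_derivative_iff_has_vector_derivative[symmetric])

lemma DERIV_within_nonneg_imp_le:
  assumes "a \<le> b" "\<And>x. x \<in> {a..b} \<Longrightarrow> (f has_real_derivative f' x) (at x within {a..b})"
    and "\<And>x. x \<in> {a..b} \<Longrightarrow> f' x \<ge> 0"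
  shows "f a \<le> f b"
  using has_integral_nonneg[OF fundamental_theorem_of_calculus_real[OF assms(1,2)]] assms(3) by force

lemma DERIV_within_nonpos_imp_ge:
  assumes "a \<le> b" "\<And>x. x \<in> {a..b} \<Longrightarrow> (f has_real_derivative f' x) (at x within {a..b})"
    and "\<And>x. x \<in> {a..b} \<Longrightarrow> f' x \<le> 0"
  shows "f b \<le> f a"
  using DERIV_within_nonneg_imp_le[of a b "\<lambda>x. - f x" "\<lambda>x. - f' x"] assms
  by (auto intro!: derivative_eq_intros)

lemma powr_antiderivative:
  fixes x e :: real
  assumes "e \<noteq> 0" "x > 0"
  shows "((\<lambda>x. x powr e / e) has_real_derivative x powr (e - 1)) (at x)"
  using assms by (auto intro!: derivative_eq_intros)

lemma x_ln_x_derivative: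
  fixes x :: real
  assumes "x > 0"
  shows "((\<lambda>x. x * ln x) has_real_derivative 1 + ln x) (at x)"
  using assms by (auto intro!: derivative_eq_intros)

text \<open>Continuity induction: there is no first time at which the strict inequality fails.\<close>
lemma continuous_strict_less_persists:
  fixes f g :: "real \<Rightarrow> real"
  assumes cont: "\<And>T. continuous_on {0..T} f" "\<And>T. continuous_on {0..T} g" and "f 0 < g 0"
    and step: "\<And>t. t \<ge> 0 \<Longrightarrow> \<forall>s\<in>{0..t}. f s \<le> g s \<Longrightarrow> f t < g t"
    and "t \<ge> 0"
  shows "f t < g t"
proof (rule ccontr)
  assume "\<not> f t < g t"
  define B where "B = {s \<in> {0..t}. g s - f s \<le> 0}"
  have "closed B"
    unfolding B_def using continuous_on_closed_Collect_le[OF continuous_on_diff[OF cont(2,1)]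
      continuous_on_const[of _ 0] closed_atLeastAtMost] by simp
  moreover have "t \<in> B"
    using \<open>\<not> f t < g t\<close> \<open>t \<ge> 0\<close> by (auto simp: B_def)
  moreover have bdd: "bdd_below B"
    by (rule bdd_belowI[of _ 0]) (auto simp: B_def)
  ultimately have t1: "Inf B \<in> B"
    using closed_contains_Inf by blast
  have "Inf B > 0"
    using t1 \<open>f 0 < g 0\<close> by (cases "Inf B = 0") (auto simp: B_def)
  have "f s - g s \<le> 0" if "s \<in> {0..<Inf B}" for s
  proof (rule ccontr)
    assume "\<not> f s - g s \<le> 0"
    then have "s \<in> B"
      using that t1 by (auto simp: B_def)
    then show False
      using cInf_lower[OF _ bdd, of s] that by simp
  qed
  then have "{0..<Inf B} \<subseteq> {s \<in> {0..Inf B}. f s - g s \<le> 0}"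
    by auto
  moreover have "closed {s \<in> {0..Inf B}. f s - g s \<le> 0}"
    using continuous_on_closed_Collect_le[OF continuous_on_diff[OF cont]
      continuous_on_const[of _ 0] closed_atLeastAtMost] by simp
  ultimately have "closure {0..<Inf B} \<subseteq> {s \<in> {0..Inf B}. f s - g s \<le> 0}"
    by (rule closure_minimal)
  then have "\<forall>s\<in>{0..Inf B}. f s \<le> g s"
    using \<open>Inf B > 0\<close> by auto
  then have "f (Inf B) < g (Inf B)"
    using step \<open>Inf B > 0\<close> by simp
  then show False
    using t1 by (simp add: B_def)
qed

section \<open>Two-sided asymptotic comparability\<close>

lemma asymp_ge1I:
  assumes "0 < c" "0 < C" "\<And>t. t \<ge> 1 \<Longrightarrow> c * g t \<le> f t" "\<And>t. t \<ge> 1 \<Longrightarrow> f t \<le> C * g t"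
  shows "asymp_ge1 f g"
  using assms unfolding asymp_ge1_def by blast

lemma asymp_ge1E:
  assumes "asymp_ge1 f g"
  obtains c C where "0 < c" "0 < C" "\<And>t. t \<ge> 1 \<Longrightarrow> c * g t \<le> f t" "\<And>t. t \<ge> 1 \<Longrightarrow> f t \<le> C * g t"
proof -
  obtain c C where "0 < c" "0 < C" "\<forall>t\<ge>1. c * g t \<le> f t \<and> f t \<le> C * g t"
    using assms unfolding asymp_ge1_def by blast
  then show thesis
    using that by auto
qed

lemma asymp_ge1_const_mult:
  "c > 0 \<Longrightarrow> asymp_ge1 (\<lambda>t. c * f t) f"
  by (rule asymp_ge1I[of c c]) auto

lemma asymp_ge1_trans [trans]:
  assumes "asymp_ge1 f g" "asymp_ge1 g h"
  shows "asymp_ge1 f h"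
proof -
  obtain c C where c: "0 < c" "0 < C" "\<And>t. t \<ge> 1 \<Longrightarrow> c * g t \<le> f t" "\<And>t. t \<ge> 1 \<Longrightarrow> f t \<le> C * g t"
    using assms(1) by (rule asymp_ge1E) blast
  obtain c' C' where c': "0 < c'" "0 < C'" "\<And>t. t \<ge> 1 \<Longrightarrow> c' * h t \<le> g t" "\<And>t. t \<ge> 1 \<Longrightarrow> g t \<le> C' * h t"
    using assms(2) by (rule asymp_ge1E) blast
  show ?thesis
  proof (rule asymp_ge1I[of "c * c'" "C * C'"])
    fix t :: real
    assume "t \<ge> 1"
    have "c * (c' * h t) \<le> c * g t" "C * g t \<le> C * (C' * h t)"
      using c c' \<open>t \<ge> 1\<close> by (auto intro!: mult_left_mono)
    then show "c * c' * h t \<le> f t" "f t \<le> C * C' * h t"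
      using c(3,4)[OF \<open>t \<ge> 1\<close>] by (auto simp: mult.assoc)
  qed (use c c' in auto)
qed

lemma asymp_ge1_cong:
  assumes "\<And>t. t \<ge> 1 \<Longrightarrow> f t = f' t" "\<And>t. t \<ge> 1 \<Longrightarrow> g t = g' t"
  shows "asymp_ge1 f g \<longleftrightarrow> asymp_ge1 f' g'"
  unfolding asymp_ge1_def using assms by auto

lemma asymp_ge1_mult:
  assumes "asymp_ge1 f g" "asymp_ge1 f' g'" "\<And>t. t \<ge> 1 \<Longrightarrow> g t \<ge> 0" "\<And>t. t \<ge> 1 \<Longrightarrow> g' t \<ge> 0"
  shows "asymp_ge1 (\<lambda>t. f t * f' t) (\<lambda>t. g t * g' t)"
proof -
  obtain c C where c: "0 < c" "0 < C" "\<And>t. t \<ge> 1 \<Longrightarrow> c * g t \<le> f t" "\<And>t. t \<ge> 1 \<Longrightarrow> f t \<le> C * g t"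
    using assms(1) by (rule asymp_ge1E) blast
  obtain c' C' where c': "0 < c'" "0 < C'" "\<And>t. t \<ge> 1 \<Longrightarrow> c' * g' t \<le> f' t" "\<And>t. t \<ge> 1 \<Longrightarrow> f' t \<le> C' * g' t"
    using assms(2) by (rule asymp_ge1E) blast
  show ?thesis
  proof (rule asymp_ge1I[of "c * c'" "C * C'"])
    fix t :: real
    assume t: "t \<ge> 1"
    have "0 \<le> c * g t" "0 \<le> c' * g' t"
      using c c' assms(3,4)[OF t] by auto
    then have "(c * g t) * (c' * g' t) \<le> f t * f' t" "f t * f' t \<le> (C * g t) * (C' * g' t)"
      using c(3,4)[OF t] c'(3,4)[OF t] by (auto intro!: mult_mono intro: order_trans)
    then show "c * c' * (g t * g' t) \<le> f t * f' t" "f t * f' t \<le> C * C' * (g t * g' t)"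
      by (simp_all add: ac_simps)
  qed (use c c' in auto)
qed

lemma asymp_ge1_powr:
  assumes "asymp_ge1 f g" "\<And>t. t \<ge> 1 \<Longrightarrow> g t > 0"
  shows "asymp_ge1 (\<lambda>t. f t powr e) (\<lambda>t. g t powr e)"
proof -
  obtain c C where c: "0 < c" "0 < C" "\<And>t. t \<ge> 1 \<Longrightarrow> c * g t \<le> f t" "\<And>t. t \<ge> 1 \<Longrightarrow> f t \<le> C * g t"
    using assms(1) by (rule asymp_ge1E) blast
  show ?thesis
  proof (rule asymp_ge1I[of "min (c powr e) (C powr e)" "max (c powr e) (C powr e)"])
    fix t :: real
    assume t: "t \<ge> 1"
    have "0 < c * g t"
      using c assms(2)[OF t] by simp
    have "(c * g t) powr e \<le> f t powr e \<and> f t powr e \<le> (C * g t) powr e \<or>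
        (C * g t) powr e \<le> f t powr e \<and> f t powr e \<le> (c * g t) powr e"
    proof (cases "e \<ge> 0")
      case True
      then show ?thesis
        using c(3,4)[OF t] \<open>0 < c * g t\<close> by (intro disjI1 conjI powr_mono2) auto
    next
      case False
      then show ?thesis
        using c(3,4)[OF t] \<open>0 < c * g t\<close> by (intro disjI2 conjI powr_mono2') auto
    qed
    moreover have "min (c powr e) (C powr e) * g t powr e = min ((c * g t) powr e) ((C * g t) powr e)"
      "max (c powr e) (C powr e) * g t powr e = max ((c * g t) powr e) ((C * g t) powr e)"
      using c assms(2)[OF t] by (simp_all add: powr_mult min_mult_distrib_right max_mult_distrib_right)
    ultimately show "min (c powr e) (C powr e) * g t powr e \<le> f t powr e"
      "f t powr e \<le> max (c powr e) (C powr e) * g t powr e"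
      by linarith+
  qed (use c in \<open>auto simp: less_max_iff_disj\<close>)
qed

lemma affine_le_max_mult:
  fixes b K x :: real
  assumes "x \<ge> 0"
  shows "b + K * x \<le> max b K * (1 + x)"
  using assms mult_right_mono[of K "max b K" x] by (simp add: algebra_simps)

lemma min_mult_le_affine:
  fixes b k x :: real
  assumes "x \<ge> 0"
  shows "min b k * (1 + x) \<le> b + k * x"
  using assms mult_right_mono[of "min b k" k x] by (simp add: algebra_simps)

lemma ex_mult_powr_neg_lt_1:
  fixes \<theta> p :: real
  assumes "0 \<le> \<theta>" "\<theta> < 1" "p > 0"
  shows "\<exists>\<epsilon>. 0 < \<epsilon> \<and> \<epsilon> < 1 \<and> \<theta> * (1 - \<epsilon>) powr (- p) < 1"
proof -
  define \<rho> where "\<rho> = (1 + \<theta>) / 2"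
  have \<rho>: "0 < \<rho>" "\<rho> < 1"
    using assms by (auto simp: \<rho>_def)
  have "\<rho> powr (1 / p) < 1"
    using \<rho> assms powr_less_mono2[of "1 / p" \<rho> 1] by simp
  moreover have "(\<rho> powr (1 / p)) powr (- p) = 1 / \<rho>"
    using \<rho> assms by (simp add: powr_powr powr_minus_divide)
  moreover have "\<theta> / \<rho> < 1"
    using \<rho> assms by (simp add: \<rho>_def)
  ultimately show ?thesis
    using \<rho> by (intro exI[of _ "1 - \<rho> powr (1 / p)"]) auto
qed

lemma ex_mult_powr_neg_le:
  fixes K e c :: real
  assumes "K > 0" "e > 0" "c > 0"
  shows "\<exists>W\<ge>1. \<forall>x\<ge>W. K * x powr (- e) \<le> c"
proof (intro exI conjI allI impI)
  define V where "V = (K / c) powr (1 / e)"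
  show "max 1 V \<ge> 1"
    by simp
  fix x
  assume "max 1 V \<le> x"
  then have "x powr (- e) \<le> V powr (- e)"
    using assms by (intro powr_mono2') (auto simp: V_def)
  also have "V powr (- e) = c / K"
    using assms by (simp add: V_def powr_powr powr_minus_divide)
  finally show "K * x powr (- e) \<le> c"
    using assms by (simp add: field_simps)
qed

lemma ln_add_one_le_mult_ln:
  fixes x x1 c t :: real
  assumes "1 < x1" "x1 \<le> x" "0 < c" "1 \<le> t" "c * t \<le> x * ln x"
  shows "ln (t + 1) \<le> (2 + (ln 2 + \<bar>ln c\<bar>) / ln x1) * ln x"
proof -
  have "x > 0" "ln x1 > 0" "ln x1 \<le> ln x"
    using assms by auto
  have "x * ln x < x * x"
    using \<open>x > 0\<close> by (intro mult_strict_left_mono) (auto simp: ln_less_self)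
  then have "c * t < x * x"
    using assms by linarith
  then have "ln (c * t) < ln (x * x)"
    using assms by simp
  then have "ln c + ln t < 2 * ln x"
    using assms \<open>x > 0\<close> by (simp add: ln_mult)
  moreover have "ln (t + 1) \<le> ln (2 * t)"
    using assms by simp
  moreover have "ln (2 * t) = ln 2 + ln t"
    using assms by (simp add: ln_mult)
  moreover have "ln 2 + \<bar>ln c\<bar> = (ln 2 + \<bar>ln c\<bar>) / ln x1 * ln x1"
    using \<open>ln x1 > 0\<close> by simp
  moreover have "\<dots> \<le> (ln 2 + \<bar>ln c\<bar>) / ln x1 * ln x"
    using \<open>ln x1 > 0\<close> \<open>ln x1 \<le> ln x\<close> by (intro mult_left_mono) auto
  ultimately have "ln (t + 1) \<le> 2 * ln x + (ln 2 + \<bar>ln c\<bar>) / ln x1 * ln x"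
    using abs_ge_minus_self[of "ln c"] by linarith
  then show ?thesis
    by (simp add: distrib_right)
qed

section \<open>The dynamics: Duhamel's formula and positivity of the risk\<close>

lemma pl_mean_pos: "\<beta> < 1 \<Longrightarrow> pl_mean \<beta> > 0"
  by (simp add: pl_mean_def)

lemma mult_pl_density:
  assumes "l \<in> {0<..<1}"
  shows "l * pl_density \<beta> l = (1 - \<beta>) * l powr (1 - \<beta>)"
  using assms powr_add[of l 1 "- \<beta>"] by (simp add: pl_density_def)

locale adagrad_norm_ls =
  fixes \<beta> \<delta> b \<eta> a A :: real and D :: "real \<Rightarrow> real \<Rightarrow> real" and R gam :: "real \<Rightarrow> real"
  assumes beta_lt_1: "\<beta> < 1" and delta_nonneg: "\<delta> \<ge> 0" and b_pos: "b > 0" and eta_pos: "\<eta> > 0"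
    and a_pos: "a > 0" and A_pos: "A > 0"
    and D_init: "\<forall>l\<in>{0<..<1}. a * l powr (- \<delta>) \<le> D l 0 \<and> D l 0 \<le> A * l powr (- \<delta>)"
    and dynamics: "adagrad_norm_ls_dynamics \<beta> b \<eta> D R gam"
    and beta_delta_lt_2: "\<beta> + \<delta> < 2"
begin

text \<open>w is the effective time: by D_eq_duhamel the mode at eigenvalue l is damped by
  exp (- (w t - 1) l). pl_mean \<beta> plays the role of Tr K / d.\<close>
definition "p = 2 - (\<beta> + \<delta>)"
definition "S t = integral {0..t} R"
definition "\<Gamma> t = integral {0..t} gam"
definition "w t = 1 + 2 * \<Gamma> t"
definition "Q t = sqrt (b\<^sup>2 + 2 * pl_mean \<beta> * S t)"
definition "I t = integral {0..t} (\<lambda>s. (gam s)\<^sup>2 * R s)"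

definition "c_lower = a * (1 - \<beta>) * exp (-1) / (2 * p)"
definition "C_init = (1 - \<beta>) * A * powr_exp_bound (1 - (\<beta> + \<delta>)) / 2"
definition "C_source = (1 - \<beta>) * powr_exp_bound (2 - \<beta>)"

lemma p_pos: "p > 0"
  using beta_delta_lt_2 by (simp add: p_def)

lemma exponent_eq_p: "1 - (\<beta> + \<delta>) + 1 = p" "- (1 - (\<beta> + \<delta>) + 1) = - p"
  by (simp_all add: p_def)

lemma mean_pos: "pl_mean \<beta> > 0"
  using pl_mean_pos[OF beta_lt_1] .

lemma c_lower_pos: "c_lower > 0"
  using a_pos beta_lt_1 p_pos by (simp add: c_lower_def)

lemma C_init_pos: "C_init > 0"
  using beta_lt_1 A_pos powr_exp_bound_pos[of "1 - (\<beta> + \<delta>)"] beta_delta_lt_2 by (simp add: C_init_def)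

lemma C_source_pos: "C_source > 0"
  using beta_lt_1 powr_exp_bound_pos[of "2 - \<beta>"] by (simp add: C_source_def)

lemma continuous_on_R: "continuous_on {0..T} R"
  using dynamics continuous_on_subset[of "{0..}" R "{0..T}"] by (auto simp: adagrad_norm_ls_dynamics_def)

lemma gam_eq: "t \<ge> 0 \<Longrightarrow> gam t = \<eta> / Q t"
  using dynamics by (simp add: adagrad_norm_ls_dynamics_def Q_def S_def)

lemma risk_has_integral:
  "t \<ge> 0 \<Longrightarrow> ((\<lambda>l. l * D l t * pl_density \<beta> l) has_integral (2 * R t)) {0<..<1}"
  using dynamics by (simp add: adagrad_norm_ls_dynamics_def)

lemma D_has_derivative:
  "l \<in> {0<..<1} \<Longrightarrow> t \<ge> 0 \<Longrightarrow> ((\<lambda>s. D l s) has_real_derivative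
     (- 2 * gam t * l * D l t + 2 * (gam t)\<^sup>2 * l * R t)) (at t within {0..})"
  using dynamics unfolding adagrad_norm_ls_dynamics_def by blast

lemma S_has_derivative: "0 \<le> t \<Longrightarrow> t \<le> T \<Longrightarrow> (S has_real_derivative R t) (at t within {0..T})"
  unfolding S_def by (rule integral_has_real_derivative[OF continuous_on_R]) auto

lemma continuous_on_S: "continuous_on {0..T} S"
  unfolding S_def by (rule indefinite_integral_continuous_1[OF integrable_continuous_real[OF continuous_on_R]])

lemma S_0 [simp]: "S 0 = 0" and \<Gamma>_0 [simp]: "\<Gamma> 0 = 0" and w_0 [simp]: "w 0 = 1"
  and I_0 [simp]: "I 0 = 0" and Q_0 [simp]: "Q 0 = b"
  using b_pos by (simp_all add: S_def \<Gamma>_def w_def I_def Q_def)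

lemma risk_ge_of_D_ge:
  assumes "t \<ge> 0" "k \<ge> 0" "Z \<ge> 0"
    and D_ge: "\<And>l. l \<in> {0<..<1} \<Longrightarrow> a * l powr (- \<delta>) * exp (- (k * l)) + Z * (1 - exp (- (k * l))) \<le> D l t"
  shows "c_lower * (1 + k) powr (- p) + pl_mean \<beta> * Z / 2
    - (1 - \<beta>) * Z * powr_exp_bound (1 - \<beta>) * (1 + k) powr (- (2 - \<beta>)) / 2 \<le> R t"
proof -
  have r: "1 - (\<beta> + \<delta>) > -1" "1 - \<beta> > -1"
    using beta_delta_lt_2 beta_lt_1 by auto
  define J1 where "J1 = integral {0<..<1} (\<lambda>l. l powr (1 - (\<beta> + \<delta>)) * exp (- (k * l)))"
  define J2 where "J2 = integral {0<..<1} (\<lambda>l. l powr (1 - \<beta>) * exp (- (k * l)))"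
  have "((\<lambda>l. (1 - \<beta>) * (a * (l powr (1 - (\<beta> + \<delta>)) * exp (- (k * l))) + Z * l powr (1 - \<beta>)
      - Z * (l powr (1 - \<beta>) * exp (- (k * l)))))
    has_integral (1 - \<beta>) * (a * J1 + Z * (1 / (2 - \<beta>)) - Z * J2)) {0<..<1}"
    using powr_has_integral_unit_interval[OF r(2)] unfolding J1_def J2_def
    by (intro has_integral_mult_right has_integral_diff has_integral_add integrable_integral
        powr_exp_integrable_unit_interval r assms(2)) simp_all
  then have H: "(1 - \<beta>) * (a * J1 + Z * (1 / (2 - \<beta>)) - Z * J2) \<le> 2 * R t"
  proof (rule has_integral_le[OF _ risk_has_integral[OF assms(1)]])
    fix l :: real
    assume l: "l \<in> {0<..<1}"
    have "l powr (1 - (\<beta> + \<delta>)) = l powr (1 - \<beta>) * l powr (- \<delta>)"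
      using l by (simp add: powr_add[symmetric] diff_diff_eq)
    then have "(1 - \<beta>) * (a * (l powr (1 - (\<beta> + \<delta>)) * exp (- (k * l))) + Z * l powr (1 - \<beta>)
        - Z * (l powr (1 - \<beta>) * exp (- (k * l))))
      = (1 - \<beta>) * l powr (1 - \<beta>) * (a * l powr (- \<delta>) * exp (- (k * l)) + Z * (1 - exp (- (k * l))))"
      by (simp only:) (simp add: algebra_simps)
    also have "\<dots> \<le> (1 - \<beta>) * l powr (1 - \<beta>) * D l t"
      using D_ge[OF l] beta_lt_1 by (intro mult_left_mono) auto
    also have "\<dots> = l * D l t * pl_density \<beta> l"
      using mult_pl_density[OF l] by simp
    finally show "(1 - \<beta>) * (a * (l powr (1 - (\<beta> + \<delta>)) * exp (- (k * l))) + Z * l powr (1 - \<beta>)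
        - Z * (l powr (1 - \<beta>) * exp (- (k * l)))) \<le> l * D l t * pl_density \<beta> l" .
  qed
  have "exp (-1) * (1 + k) powr (- p) / p \<le> J1"
    using powr_exp_integral_lower[OF r(1) assms(2)] unfolding J1_def exponent_eq_p .
  then have J1: "(1 - \<beta>) * a * (exp (-1) * (1 + k) powr (- p) / p) \<le> (1 - \<beta>) * a * J1"
    using beta_lt_1 a_pos by (intro mult_left_mono) auto
  have "J2 \<le> powr_exp_bound (1 - \<beta>) * (1 + k) powr (- (2 - \<beta>))"
    using powr_exp_integral_upper[OF r(2) assms(2)] by (simp add: J2_def)
  then have J2: "(1 - \<beta>) * Z * J2 \<le> (1 - \<beta>) * Z * (powr_exp_bound (1 - \<beta>) * (1 + k) powr (- (2 - \<beta>)))"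
    using beta_lt_1 assms(3) by (intro mult_left_mono) auto
  have "(1 - \<beta>) * a * (exp (-1) * (1 + k) powr (- p) / p) + (1 - \<beta>) * Z * (1 / (2 - \<beta>))
      - (1 - \<beta>) * Z * (powr_exp_bound (1 - \<beta>) * (1 + k) powr (- (2 - \<beta>))) \<le> 2 * R t"
    using H J1 J2 right_diff_distrib[of "1 - \<beta>" "a * J1 + Z * (1 / (2 - \<beta>))" "Z * J2"]
      distrib_left[of "1 - \<beta>" "a * J1" "Z * (1 / (2 - \<beta>))"]
    unfolding mult.assoc by linarith
  then show ?thesis
    using beta_lt_1 p_pos by (simp add: c_lower_def pl_mean_def field_simps)
qed

lemma risk_le_of_D_le:
  assumes "t \<ge> 0" "k1 \<ge> 0" "k2 \<ge> 0" "X \<ge> 0"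
    and D_le: "\<And>l. l \<in> {0<..<1} \<Longrightarrow> D l t \<le> A * l powr (- \<delta>) * exp (- (k1 * l)) + 2 * X * l * exp (- (k2 * l)) + Y"
  shows "R t \<le> C_init * (1 + k1) powr (- p) + C_source * X * (1 + k2) powr (- (3 - \<beta>)) + pl_mean \<beta> * Y / 2"
proof -
  have r: "1 - (\<beta> + \<delta>) > -1" "2 - \<beta> > -1" "1 - \<beta> > -1"
    using beta_delta_lt_2 beta_lt_1 by auto
  define J1 where "J1 = integral {0<..<1} (\<lambda>l. l powr (1 - (\<beta> + \<delta>)) * exp (- (k1 * l)))"
  define J2 where "J2 = integral {0<..<1} (\<lambda>l. l powr (2 - \<beta>) * exp (- (k2 * l)))"
  have "((\<lambda>l. (1 - \<beta>) * (A * (l powr (1 - (\<beta> + \<delta>)) * exp (- (k1 * l)))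
      + 2 * X * (l powr (2 - \<beta>) * exp (- (k2 * l))) + Y * l powr (1 - \<beta>)))
    has_integral (1 - \<beta>) * (A * J1 + 2 * X * J2 + Y * (1 / (2 - \<beta>)))) {0<..<1}"
    using powr_has_integral_unit_interval[OF r(3)] unfolding J1_def J2_def
    by (intro has_integral_mult_right has_integral_add integrable_integral
        powr_exp_integrable_unit_interval r assms(2,3)) simp_all
  then have H: "2 * R t \<le> (1 - \<beta>) * (A * J1 + 2 * X * J2 + Y * (1 / (2 - \<beta>)))"
  proof (rule has_integral_le[OF risk_has_integral[OF assms(1)]])
    fix l :: real
    assume l: "l \<in> {0<..<1}"
    have "l * D l t * pl_density \<beta> l = (1 - \<beta>) * l powr (1 - \<beta>) * D l t"
      using mult_pl_density[OF l] by simp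
    also have "\<dots> \<le> (1 - \<beta>) * l powr (1 - \<beta>)
        * (A * l powr (- \<delta>) * exp (- (k1 * l)) + 2 * X * l * exp (- (k2 * l)) + Y)"
      using D_le[OF l] beta_lt_1 by (intro mult_left_mono) auto
    also have "\<dots> = (1 - \<beta>) * (A * (l powr (1 - (\<beta> + \<delta>)) * exp (- (k1 * l)))
        + 2 * X * (l powr (2 - \<beta>) * exp (- (k2 * l))) + Y * l powr (1 - \<beta>))"
    proof -
      have "l powr (1 - (\<beta> + \<delta>)) = l powr (1 - \<beta>) * l powr (- \<delta>)"
        "l powr (2 - \<beta>) = l powr (1 - \<beta>) * l"
        using l powr_add[of l "1 - \<beta>" 1] by (simp_all add: powr_add[symmetric] diff_diff_eq)
      then show ?thesis
        by (simp only:) (simp add: algebra_simps)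
    qed
    finally show "l * D l t * pl_density \<beta> l \<le> (1 - \<beta>) * (A * (l powr (1 - (\<beta> + \<delta>)) * exp (- (k1 * l)))
        + 2 * X * (l powr (2 - \<beta>) * exp (- (k2 * l))) + Y * l powr (1 - \<beta>))" .
  qed
  have "J1 \<le> powr_exp_bound (1 - (\<beta> + \<delta>)) * (1 + k1) powr (- p)"
    using powr_exp_integral_upper[OF r(1) assms(2)] unfolding J1_def exponent_eq_p .
  then have J1: "(1 - \<beta>) * A * J1 \<le> (1 - \<beta>) * A * (powr_exp_bound (1 - (\<beta> + \<delta>)) * (1 + k1) powr (- p))"
    using beta_lt_1 A_pos by (intro mult_left_mono) auto
  have "J2 \<le> powr_exp_bound (2 - \<beta>) * (1 + k2) powr (- (3 - \<beta>))"
    using powr_exp_integral_upper[OF r(2) assms(3)] by (simp add: J2_def)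
  then have J2: "(1 - \<beta>) * (2 * X) * J2 \<le> (1 - \<beta>) * (2 * X) * (powr_exp_bound (2 - \<beta>) * (1 + k2) powr (- (3 - \<beta>)))"
    using beta_lt_1 assms(4) by (intro mult_left_mono) auto
  have "2 * R t \<le> (1 - \<beta>) * A * (powr_exp_bound (1 - (\<beta> + \<delta>)) * (1 + k1) powr (- p))
      + (1 - \<beta>) * (2 * X) * (powr_exp_bound (2 - \<beta>) * (1 + k2) powr (- (3 - \<beta>))) + (1 - \<beta>) * (Y * (1 / (2 - \<beta>)))"
    using H J1 J2 distrib_left[of "1 - \<beta>" "A * J1 + 2 * X * J2" "Y * (1 / (2 - \<beta>))"]
      distrib_left[of "1 - \<beta>" "A * J1" "2 * X * J2"]
    unfolding mult.assoc by linarith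
  then show ?thesis
    using beta_lt_1 by (simp add: C_init_def C_source_def pl_mean_def field_simps)
qed

definition "source l s = 2 * l * (gam s)\<^sup>2 * R s * exp (2 * l * \<Gamma> s)"

text \<open>Before R is known to be nonnegative, these facts hold only on intervals where it is;
  R_pos removes the restriction by continuity induction.\<close>
context
  fixes t :: real
  assumes t_nonneg: "t \<ge> 0" and R_nonneg_upto: "\<forall>s\<in>{0..t}. R s \<ge> 0"
begin

lemma Q_pos_upto: "s \<in> {0..t} \<Longrightarrow> Q s > 0"
proof -
  assume s: "s \<in> {0..t}"
  then have "S s \<ge> 0"
    unfolding S_def using R_nonneg_upto
    by (intro integral_nonneg integrable_continuous_real continuous_on_R) auto
  then show ?thesis
    using b_pos mean_pos by (simp add: Q_def add_pos_nonneg)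
qed

lemma continuous_on_gam_upto: "continuous_on {0..t} gam"
proof -
  have "continuous_on {0..t} (\<lambda>s. \<eta> / Q s)"
    unfolding Q_def using Q_pos_upto unfolding Q_def
    by (intro continuous_on_divide continuous_on_const continuous_intros continuous_on_S) force
  then show ?thesis
    by (rule continuous_on_eq) (simp add: gam_eq)
qed

lemma gam_pos_upto: "s \<in> {0..t} \<Longrightarrow> gam s > 0"
  using Q_pos_upto gam_eq eta_pos by simp

lemma \<Gamma>_has_derivative_upto: "s \<in> {0..t} \<Longrightarrow> (\<Gamma> has_real_derivative gam s) (at s within {0..t})"
  unfolding \<Gamma>_def by (rule integral_has_real_derivative[OF continuous_on_gam_upto])

lemma continuous_on_\<Gamma>_upto: "continuous_on {0..t} \<Gamma>"
  unfolding \<Gamma>_def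
  by (rule indefinite_integral_continuous_1[OF integrable_continuous_real[OF continuous_on_gam_upto]])

lemma \<Gamma>_nonneg_upto: "\<Gamma> t \<ge> 0"
  unfolding \<Gamma>_def using gam_pos_upto
  by (intro integral_nonneg integrable_continuous_real continuous_on_gam_upto) (auto simp: less_imp_le)

lemma D_eq_duhamel_upto:
  assumes l: "l \<in> {0<..<1}"
  shows "D l t = exp (- (2 * l * \<Gamma> t)) * (D l 0 + integral {0..t} (source l))"
proof -
  have "(source l has_integral D l t * exp (2 * l * \<Gamma> t) - D l 0 * exp (2 * l * \<Gamma> 0)) {0..t}"
  proof (rule fundamental_theorem_of_calculus_real[OF t_nonneg])
    fix s
    assume s: "s \<in> {0..t}"
    have "((\<lambda>s. D l s) has_real_derivative - 2 * gam s * l * D l s + 2 * (gam s)\<^sup>2 * l * R s) (at s within {0..t})"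
      using D_has_derivative[OF l, of s] s by (auto intro: has_field_derivative_subset)
    moreover have "((\<lambda>s. exp (2 * l * \<Gamma> s)) has_real_derivative exp (2 * l * \<Gamma> s) * (2 * l * gam s)) (at s within {0..t})"
      using DERIV_chain2[OF DERIV_exp DERIV_cmult[OF \<Gamma>_has_derivative_upto[OF s], of "2 * l"]] by simp
    ultimately show "((\<lambda>s. D l s * exp (2 * l * \<Gamma> s)) has_real_derivative source l s) (at s within {0..t})"
      unfolding source_def by (rule DERIV_mult[THEN DERIV_cong]) (simp add: algebra_simps power2_eq_square)
  qed
  then show ?thesis
    by (simp add: integral_unique exp_minus field_simps)
qed

lemma risk_lower_upto: "c_lower * w t powr (- p) \<le> R t"
proof -
  have "c_lower * (1 + 2 * \<Gamma> t) powr (- p) + pl_mean \<beta> * 0 / 2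
      - (1 - \<beta>) * 0 * powr_exp_bound (1 - \<beta>) * (1 + 2 * \<Gamma> t) powr (- (2 - \<beta>)) / 2 \<le> R t"
  proof (rule risk_ge_of_D_ge[OF t_nonneg _ order_refl])
    show "0 \<le> 2 * \<Gamma> t"
      using \<Gamma>_nonneg_upto by simp
    fix l :: real
    assume l: "l \<in> {0<..<1}"
    have "integral {0..t} (source l) \<ge> 0"
      unfolding source_def using l R_nonneg_upto
      by (intro integral_nonneg integrable_continuous_real continuous_intros continuous_on_gam_upto
          continuous_on_R continuous_on_\<Gamma>_upto) auto
    moreover have "a * l powr (- \<delta>) \<le> D l 0"
      using D_init l by blast
    ultimately have "exp (- (2 * l * \<Gamma> t)) * (a * l powr (- \<delta>)) \<le> D l t"
      unfolding D_eq_duhamel_upto[OF l] by (intro mult_left_mono) auto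
    then show "a * l powr (- \<delta>) * exp (- (2 * \<Gamma> t * l)) + 0 * (1 - exp (- (2 * \<Gamma> t * l))) \<le> D l t"
      by (simp add: ac_simps)
  qed
  then show ?thesis
    by (simp add: w_def)
qed

end

lemma R_pos: "t \<ge> 0 \<Longrightarrow> R t > 0"
proof (rule continuous_strict_less_persists[OF continuous_on_const continuous_on_R])
  have "c_lower * (1 + 0) powr (- p) + pl_mean \<beta> * 0 / 2
      - (1 - \<beta>) * 0 * powr_exp_bound (1 - \<beta>) * (1 + 0) powr (- (2 - \<beta>)) / 2 \<le> R 0"
    by (rule risk_ge_of_D_ge) (use D_init in auto)
  then show "0 < R 0"
    using c_lower_pos by simp
next
  fix t :: real
  assume t: "t \<ge> 0" "\<forall>s\<in>{0..t}. 0 \<le> R s"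
  then have "w t \<ge> 1"
    using \<Gamma>_nonneg_upto by (simp add: w_def)
  then have "0 < c_lower * w t powr (- p)"
    using c_lower_pos by simp
  then show "0 < R t"
    using risk_lower_upto[OF t] by linarith
qed

lemma R_nonneg: "t \<ge> 0 \<Longrightarrow> R t \<ge> 0"
  using R_pos less_imp_le by blast

lemma R_nonneg_interval: "\<forall>s\<in>{0..t}. R s \<ge> 0"
  using R_pos by (auto intro: less_imp_le)

lemma continuous_on_gam: "continuous_on {0..T} gam"
  using continuous_on_gam_upto[OF _ R_nonneg_interval] by (cases "T \<ge> 0") auto

lemma gam_pos: "t \<ge> 0 \<Longrightarrow> gam t > 0"
  using gam_pos_upto[OF _ R_nonneg_interval] by auto

lemma Q_pos: "t \<ge> 0 \<Longrightarrow> Q t > 0"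
  using Q_pos_upto[OF _ R_nonneg_interval] by auto

lemma \<Gamma>_has_derivative: "0 \<le> t \<Longrightarrow> t \<le> T \<Longrightarrow> (\<Gamma> has_real_derivative gam t) (at t within {0..T})"
  using \<Gamma>_has_derivative_upto[OF _ R_nonneg_interval] by auto

lemma continuous_on_\<Gamma>: "continuous_on {0..T} \<Gamma>"
  unfolding \<Gamma>_def by (rule indefinite_integral_continuous_1[OF integrable_continuous_real[OF continuous_on_gam]])

lemma D_eq_duhamel: "t \<ge> 0 \<Longrightarrow> l \<in> {0<..<1} \<Longrightarrow> D l t = exp (- (2 * l * \<Gamma> t)) * (D l 0 + integral {0..t} (source l))"
  using D_eq_duhamel_upto[OF _ R_nonneg_interval] by blast

lemma risk_lower: "t \<ge> 0 \<Longrightarrow> c_lower * w t powr (- p) \<le> R t"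
  using risk_lower_upto[OF _ R_nonneg_interval] by blast

lemma \<Gamma>_mono: "0 \<le> s \<Longrightarrow> s \<le> t \<Longrightarrow> \<Gamma> s \<le> \<Gamma> t"
  by (rule DERIV_within_nonneg_imp_le[of s t \<Gamma> gam])
    (auto intro: has_field_derivative_subset[OF \<Gamma>_has_derivative[of _ t]] less_imp_le[OF gam_pos])

lemma S_mono: "0 \<le> s \<Longrightarrow> s \<le> t \<Longrightarrow> S s \<le> S t"
  by (rule DERIV_within_nonneg_imp_le[of s t S R])
    (auto intro: has_field_derivative_subset[OF S_has_derivative[of _ t]] less_imp_le[OF R_pos])

lemma w_ge_1: "t \<ge> 0 \<Longrightarrow> w t \<ge> 1"
  using \<Gamma>_mono[of 0 t] by (simp add: w_def)

lemma w_mono: "0 \<le> s \<Longrightarrow> s \<le> t \<Longrightarrow> w s \<le> w t"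
  using \<Gamma>_mono by (simp add: w_def)

lemma w_has_derivative: "0 \<le> t \<Longrightarrow> t \<le> T \<Longrightarrow> (w has_real_derivative 2 * gam t) (at t within {0..T})"
  unfolding w_def by (auto intro!: derivative_eq_intros \<Gamma>_has_derivative)

lemma continuous_on_w: "continuous_on {0..T} w"
  unfolding w_def by (intro continuous_intros continuous_on_\<Gamma>)

lemma Q_has_derivative:
  "0 \<le> t \<Longrightarrow> t \<le> T \<Longrightarrow> (Q has_real_derivative pl_mean \<beta> * R t / Q t) (at t within {0..T})"
  using Q_pos[of t] unfolding Q_def
  by (auto intro!: derivative_eq_intros S_has_derivative simp: field_simps)

lemma Q_mono: "0 \<le> s \<Longrightarrow> s \<le> t \<Longrightarrow> Q s \<le> Q t"
  using S_mono mean_pos by (simp add: Q_def)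

lemma Q_ge_b: "t \<ge> 0 \<Longrightarrow> b \<le> Q t"
  using Q_mono[of 0 t] by simp

lemma gam_antimono: "0 \<le> s \<Longrightarrow> s \<le> t \<Longrightarrow> gam t \<le> gam s"
  using Q_mono Q_pos eta_pos by (simp add: gam_eq frac_le)

lemma gam_le: "t \<ge> 0 \<Longrightarrow> gam t \<le> \<eta> / b"
  using gam_antimono[of 0 t] gam_eq[of 0] by simp

lemma I_has_derivative: "0 \<le> t \<Longrightarrow> t \<le> T \<Longrightarrow> (I has_real_derivative (gam t)\<^sup>2 * R t) (at t within {0..T})"
  unfolding I_def by (rule integral_has_real_derivative) (auto intro!: continuous_intros continuous_on_gam continuous_on_R)

lemma I_mono: "0 \<le> s \<Longrightarrow> s \<le> t \<Longrightarrow> I s \<le> I t"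
  by (rule DERIV_within_nonneg_imp_le[of s t I "\<lambda>x. (gam x)\<^sup>2 * R x"])
    (auto intro: has_field_derivative_subset[OF I_has_derivative[of _ t]] intro!: mult_nonneg_nonneg R_nonneg)

text \<open>Since gam^2 R = (\<eta>^2 / c0) (ln Q)', the gam^2-weighted risk integral is logarithmic in Q.\<close>
lemma I_eq_ln: "t \<ge> 0 \<Longrightarrow> I t = \<eta>\<^sup>2 / pl_mean \<beta> * ln (Q t / b)"
proof -
  assume t: "t \<ge> 0"
  have "((\<lambda>s. (gam s)\<^sup>2 * R s) has_integral \<eta>\<^sup>2 / pl_mean \<beta> * ln (Q t / b) - \<eta>\<^sup>2 / pl_mean \<beta> * ln (Q 0 / b)) {0..t}"
  proof (rule fundamental_theorem_of_calculus_real[OF t])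
    fix s
    assume s: "s \<in> {0..t}"
    then show "((\<lambda>s. \<eta>\<^sup>2 / pl_mean \<beta> * ln (Q s / b)) has_real_derivative (gam s)\<^sup>2 * R s) (at s within {0..t})"
      using Q_pos[of s] b_pos mean_pos
      by (auto intro!: derivative_eq_intros Q_has_derivative simp: gam_eq field_simps power2_eq_square)
  qed
  then show ?thesis
    using b_pos by (simp add: I_def integral_unique)
qed

lemma continuous_on_source: "continuous_on {0..T} (source l)"
  unfolding source_def by (intro continuous_intros continuous_on_gam continuous_on_R continuous_on_\<Gamma>)

lemma exp_\<Gamma>_has_integral:
  assumes "0 \<le> s0" "s0 \<le> t"
  shows "((\<lambda>s. 2 * l * gam s * exp (2 * l * \<Gamma> s)) has_integral exp (2 * l * \<Gamma> t) - exp (2 * l * \<Gamma> s0)) {s0..t}"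
proof (rule fundamental_theorem_of_calculus_real[OF assms(2)])
  fix s
  assume "s \<in> {s0..t}"
  then have "(\<Gamma> has_real_derivative gam s) (at s within {s0..t})"
    using assms by (auto intro: has_field_derivative_subset[OF \<Gamma>_has_derivative[of s t]])
  then show "((\<lambda>s. exp (2 * l * \<Gamma> s)) has_real_derivative 2 * l * gam s * exp (2 * l * \<Gamma> s)) (at s within {s0..t})"
    by (auto intro!: derivative_eq_intros)
qed

lemma source_integral_head_le:
  assumes "0 \<le> s0" "0 \<le> l"
  shows "integral {0..s0} (source l) \<le> 2 * l * exp (2 * l * \<Gamma> s0) * I s0"
proof -
  have "integral {0..s0} (source l) \<le> integral {0..s0} (\<lambda>s. 2 * l * exp (2 * l * \<Gamma> s0) * ((gam s)\<^sup>2 * R s))"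
  proof (rule integral_le)
    show "source l integrable_on {0..s0}" "(\<lambda>s. 2 * l * exp (2 * l * \<Gamma> s0) * ((gam s)\<^sup>2 * R s)) integrable_on {0..s0}"
      by (auto intro!: integrable_continuous_real continuous_on_source continuous_intros continuous_on_gam continuous_on_R)
    fix s
    assume "s \<in> {0..s0}"
    then have "exp (2 * l * \<Gamma> s) \<le> exp (2 * l * \<Gamma> s0)" "0 \<le> 2 * l * ((gam s)\<^sup>2 * R s)"
      using \<Gamma>_mono[of s s0] R_nonneg[of s] assms by (auto intro: mult_left_mono)
    then have "2 * l * ((gam s)\<^sup>2 * R s) * exp (2 * l * \<Gamma> s) \<le> 2 * l * ((gam s)\<^sup>2 * R s) * exp (2 * l * \<Gamma> s0)"
      by (intro mult_left_mono)
    then show "source l s \<le> 2 * l * exp (2 * l * \<Gamma> s0) * ((gam s)\<^sup>2 * R s)"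
      unfolding source_def by (simp add: ac_simps)
  qed
  then show ?thesis
    by (simp add: I_def)
qed

lemma source_integral_tail_le:
  assumes "0 \<le> s0" "s0 \<le> t" "0 \<le> l" and lr_risk: "\<forall>s\<in>{s0..t}. gam s * R s \<le> Y"
  shows "integral {s0..t} (source l) \<le> Y * (exp (2 * l * \<Gamma> t) - exp (2 * l * \<Gamma> s0))"
proof -
  have "integral {s0..t} (source l) \<le> integral {s0..t} (\<lambda>s. Y * (2 * l * gam s * exp (2 * l * \<Gamma> s)))"
  proof (rule integral_le)
    show "source l integrable_on {s0..t}"
      using assms by (intro integrable_on_subinterval[OF integrable_continuous_real[OF continuous_on_source]]) auto
    show "(\<lambda>s. Y * (2 * l * gam s * exp (2 * l * \<Gamma> s))) integrable_on {s0..t}"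
      using has_integral_mult_right[OF exp_\<Gamma>_has_integral[OF assms(1,2)]] by blast
    fix s
    assume s: "s \<in> {s0..t}"
    have "gam s * (gam s * R s) * (2 * l * exp (2 * l * \<Gamma> s)) \<le> gam s * Y * (2 * l * exp (2 * l * \<Gamma> s))"
      using lr_risk s gam_pos[of s] assms by (intro mult_right_mono mult_left_mono) auto
    then show "source l s \<le> Y * (2 * l * gam s * exp (2 * l * \<Gamma> s))"
      unfolding source_def by (simp add: power2_eq_square algebra_simps)
  qed
  also have "\<dots> = Y * (exp (2 * l * \<Gamma> t) - exp (2 * l * \<Gamma> s0))"
    by (rule integral_unique[OF has_integral_mult_right[OF exp_\<Gamma>_has_integral[OF assms(1,2)]]])
  finally show ?thesis .
qed

lemma source_integral_ge:
  assumes "0 \<le> t" "0 \<le> l" and lr_risk: "\<forall>s\<in>{0..t}. Y \<le> gam s * R s"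
  shows "Y * (exp (2 * l * \<Gamma> t) - 1) \<le> integral {0..t} (source l)"
proof -
  have "Y * (exp (2 * l * \<Gamma> t) - 1) = Y * (exp (2 * l * \<Gamma> t) - exp (2 * l * \<Gamma> 0))"
    by simp
  also have "\<dots> = integral {0..t} (\<lambda>s. Y * (2 * l * gam s * exp (2 * l * \<Gamma> s)))"
    by (rule integral_unique[OF has_integral_mult_right[OF exp_\<Gamma>_has_integral[OF order_refl assms(1)]], symmetric])
  also have "\<dots> \<le> integral {0..t} (source l)"
  proof (rule integral_le)
    show "source l integrable_on {0..t}"
      by (rule integrable_continuous_real[OF continuous_on_source])
    show "(\<lambda>s. Y * (2 * l * gam s * exp (2 * l * \<Gamma> s))) integrable_on {0..t}"
      using has_integral_mult_right[OF exp_\<Gamma>_has_integral[OF order_refl assms(1)]] by blast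
    fix s
    assume s: "s \<in> {0..t}"
    have "gam s * Y * (2 * l * exp (2 * l * \<Gamma> s)) \<le> gam s * (gam s * R s) * (2 * l * exp (2 * l * \<Gamma> s))"
      using lr_risk s gam_pos[of s] assms by (intro mult_right_mono mult_left_mono) auto
    then show "Y * (2 * l * gam s * exp (2 * l * \<Gamma> s)) \<le> source l s"
      unfolding source_def by (simp add: power2_eq_square algebra_simps)
  qed
  finally show ?thesis .
qed

text \<open>Splitting the Duhamel integral at s0: the source emitted before s0 has decayed by the factor
  exp (-2 l (\<Gamma> t - \<Gamma> s0)), the source emitted after s0 is controlled by gam R on [s0, t].\<close>
lemma D_le_split:
  assumes "0 \<le> s0" "s0 \<le> t" "l \<in> {0<..<1}" and lr_risk: "\<forall>s\<in>{s0..t}. gam s * R s \<le> Y"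
  shows "D l t \<le> A * l powr (- \<delta>) * exp (- (2 * \<Gamma> t * l)) + 2 * I t * l * exp (- (2 * (\<Gamma> t - \<Gamma> s0) * l))
    + Y * (1 - exp (- (2 * (\<Gamma> t - \<Gamma> s0) * l)))"
proof -
  have t: "0 \<le> t" and l: "0 \<le> l"
    using assms by auto
  have "integral {0..s0} (source l) + integral {s0..t} (source l) = integral {0..t} (source l)"
    using assms(1,2) by (intro Henstock_Kurzweil_Integration.integral_combine integrable_continuous_real
        continuous_on_source) auto
  moreover have "2 * l * exp (2 * l * \<Gamma> s0) * I s0 \<le> 2 * l * exp (2 * l * \<Gamma> s0) * I t"
    using I_mono[OF assms(1,2)] l by (intro mult_left_mono) auto
  moreover note source_integral_head_le[OF assms(1) l]
  moreover have "D l 0 \<le> A * l powr (- \<delta>)"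
    using D_init assms(3) by blast
  ultimately have "D l 0 + integral {0..t} (source l)
      \<le> A * l powr (- \<delta>) + 2 * l * exp (2 * l * \<Gamma> s0) * I t + Y * (exp (2 * l * \<Gamma> t) - exp (2 * l * \<Gamma> s0))"
    using source_integral_tail_le[OF assms(1,2) l lr_risk] by linarith
  then have "D l t \<le> exp (- (2 * l * \<Gamma> t))
      * (A * l powr (- \<delta>) + 2 * l * exp (2 * l * \<Gamma> s0) * I t + Y * (exp (2 * l * \<Gamma> t) - exp (2 * l * \<Gamma> s0)))"
    unfolding D_eq_duhamel[OF t assms(3)] by (intro mult_left_mono) auto
  also have "\<dots> = A * l powr (- \<delta>) * exp (- (2 * \<Gamma> t * l)) + 2 * I t * l * exp (- (2 * (\<Gamma> t - \<Gamma> s0) * l))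
      + Y * (1 - exp (- (2 * (\<Gamma> t - \<Gamma> s0) * l)))"
    by (simp add: algebra_simps exp_minus exp_diff field_simps)
  finally show ?thesis .
qed

lemma D_ge_of_lr_risk_ge:
  assumes "0 \<le> t" "l \<in> {0<..<1}" and lr_risk: "\<forall>s\<in>{0..t}. Y \<le> gam s * R s"
  shows "a * l powr (- \<delta>) * exp (- (2 * \<Gamma> t * l)) + Y * (1 - exp (- (2 * \<Gamma> t * l))) \<le> D l t"
proof -
  have "a * l powr (- \<delta>) + Y * (exp (2 * l * \<Gamma> t) - 1) \<le> D l 0 + integral {0..t} (source l)"
    using source_integral_ge[OF assms(1) _ lr_risk, of l] D_init assms(2) by fastforce
  then have "exp (- (2 * l * \<Gamma> t)) * (a * l powr (- \<delta>) + Y * (exp (2 * l * \<Gamma> t) - 1)) \<le> D l t"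
    unfolding D_eq_duhamel[OF assms(1,2)] by (intro mult_left_mono) auto
  moreover have "exp (- (2 * l * \<Gamma> t)) * (a * l powr (- \<delta>) + Y * (exp (2 * l * \<Gamma> t) - 1))
      = a * l powr (- \<delta>) * exp (- (2 * \<Gamma> t * l)) + Y * (1 - exp (- (2 * \<Gamma> t * l)))"
    by (simp add: exp_minus field_simps)
  ultimately show ?thesis
    by simp
qed

lemma risk_le_apriori: "t \<ge> 0 \<Longrightarrow> R t \<le> C_init + C_source * I t"
proof -
  assume t: "t \<ge> 0"
  have "R t \<le> C_init * (1 + 2 * \<Gamma> t) powr (- p) + C_source * I t * (1 + 0) powr (- (3 - \<beta>)) + pl_mean \<beta> * 0 / 2"
  proof (rule risk_le_of_D_le[OF t])
    fix l :: real
    assume "l \<in> {0<..<1}"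
    then show "D l t \<le> A * l powr (- \<delta>) * exp (- (2 * \<Gamma> t * l)) + 2 * I t * l * exp (- (0 * l)) + 0"
      using D_le_split[OF t order_refl, of l "gam t * R t"] by simp
  qed (use t \<Gamma>_mono[of 0 t] I_mono[of 0 t] in auto)
  moreover have "C_init * (1 + 2 * \<Gamma> t) powr (- p) \<le> C_init"
    using C_init_pos \<Gamma>_mono[of 0 t] t p_pos by (simp add: powr_le_one_le ge_one_powr_ge_zero powr_minus field_simps)
  ultimately show ?thesis
    by simp
qed

lemma Q_le_linear: "\<exists>K>0. \<forall>t\<ge>0. Q t \<le> b + K * t"
proof (intro exI conjI allI impI)
  define K where "K = (pl_mean \<beta> * C_init + C_source * \<eta>\<^sup>2) / b"
  show "K > 0"
    using mean_pos C_init_pos C_source_pos b_pos eta_pos by (simp add: K_def add_pos_pos)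
  fix t :: real
  assume t: "t \<ge> 0"
  have "(\<lambda>s. b + K * s - Q s) 0 \<le> (\<lambda>s. b + K * s - Q s) t"
  proof (rule DERIV_within_nonneg_imp_le[OF t])
    fix s
    assume s: "s \<in> {0..t}"
    then show "((\<lambda>s. b + K * s - Q s) has_real_derivative K - pl_mean \<beta> * R s / Q s) (at s within {0..t})"
      by (auto intro!: derivative_eq_intros Q_has_derivative)
    have Q: "b \<le> Q s" "0 < Q s"
      using Q_ge_b Q_pos s by auto
    have "pl_mean \<beta> * R s \<le> pl_mean \<beta> * C_init + C_source * \<eta>\<^sup>2 * ln (Q s / b)"
      using mult_left_mono[OF risk_le_apriori[of s] less_imp_le[OF mean_pos]] I_eq_ln[of s] s mean_pos
      by (simp add: algebra_simps)
    also have "\<dots> \<le> pl_mean \<beta> * C_init + C_source * \<eta>\<^sup>2 * (Q s / b)"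
      using ln_le_minus_one[of "Q s / b"] Q b_pos C_source_pos by (intro add_left_mono mult_left_mono) auto
    finally have "pl_mean \<beta> * R s / Q s \<le> pl_mean \<beta> * C_init / Q s + C_source * \<eta>\<^sup>2 / b"
      using Q by (simp add: field_simps)
    also have "\<dots> \<le> K"
      using Q b_pos mean_pos C_init_pos by (simp add: K_def add_divide_distrib frac_le)
    finally show "0 \<le> K - pl_mean \<beta> * R s / Q s"
      by simp
  qed
  then show "Q t \<le> b + K * t"
    by simp
qed

lemma \<Gamma>_unbounded: "\<exists>T\<ge>0. G \<le> \<Gamma> T"
proof -
  obtain K where K: "K > 0" "\<And>t. t \<ge> 0 \<Longrightarrow> Q t \<le> b + K * t"
    using Q_le_linear by blast
  have \<Gamma>_ge: "\<eta> / K * ln (1 + K * t / b) \<le> \<Gamma> t" if t: "t \<ge> 0" for t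
  proof -
    have "(\<lambda>s. \<Gamma> s - \<eta> / K * ln (1 + K * s / b)) 0 \<le> (\<lambda>s. \<Gamma> s - \<eta> / K * ln (1 + K * s / b)) t"
    proof (rule DERIV_within_nonneg_imp_le[OF t])
      fix s
      assume s: "s \<in> {0..t}"
      then have pos: "1 + K * s / b > 0"
        using K b_pos by (simp add: add_pos_nonneg)
      then show "((\<lambda>s. \<Gamma> s - \<eta> / K * ln (1 + K * s / b)) has_real_derivative
          gam s - \<eta> / K * (K / b / (1 + K * s / b))) (at s within {0..t})"
        using s by (auto intro!: derivative_eq_intros \<Gamma>_has_derivative simp: field_simps)
      have "\<eta> / K * (K / b / (1 + K * s / b)) = \<eta> / (b + K * s)"
        using K b_pos pos by (simp add: field_simps)
      also have "\<eta> / (b + K * s) \<le> \<eta> / Q s"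
        using K(2)[of s] s Q_pos[of s] eta_pos by (intro divide_left_mono) auto
      finally show "0 \<le> gam s - \<eta> / K * (K / b / (1 + K * s / b))"
        using s by (simp add: gam_eq)
    qed
    then show ?thesis
      by simp
  qed
  define T where "T = b * (exp (max G 0 * K / \<eta>) - 1) / K"
  have "T \<ge> 0"
    using K b_pos eta_pos by (simp add: T_def)
  moreover have "\<eta> / K * ln (1 + K * T / b) = max G 0"
    using K b_pos eta_pos by (simp add: T_def)
  ultimately show ?thesis
    using \<Gamma>_ge by force
qed

section \<open>The bootstrap bound on the risk\<close>

lemma S_le_of_lr_ge:
  assumes "g > 0" "\<forall>t\<ge>0. g \<le> gam t" "t \<ge> 0"
  shows "S t \<le> (\<eta> / g)\<^sup>2 / (2 * pl_mean \<beta>)"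
proof -
  have "g \<le> \<eta> / Q t"
    using assms gam_eq by simp
  then have "Q t \<le> \<eta> / g"
    using assms(1) Q_pos[OF assms(3)] by (simp add: field_simps)
  then have "(Q t)\<^sup>2 \<le> (\<eta> / g)\<^sup>2"
    using Q_pos[OF assms(3)] by (intro power_mono) auto
  moreover have "(Q t)\<^sup>2 = b\<^sup>2 + 2 * pl_mean \<beta> * S t"
    using Q_pos[OF assms(3)] unfolding Q_def by (subst real_sqrt_pow2) (auto intro: order.strict_implies_order)
  ultimately have "b\<^sup>2 + 2 * pl_mean \<beta> * S t \<le> (\<eta> / g)\<^sup>2"
    by simp
  then have "2 * pl_mean \<beta> * S t \<le> (\<eta> / g)\<^sup>2"
    using zero_le_power2[of b] by linarith
  then show ?thesis
    using mean_pos by (simp add: pos_le_divide_eq ac_simps)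
qed

lemma risk_ge_const_of_lr_ge:
  assumes lr: "\<forall>t\<ge>0. 2 / pl_mean \<beta> \<le> gam t"
  shows "\<exists>m>0. \<forall>t\<ge>0. m < R t"
proof -
  define C where "C = (1 - \<beta>) * powr_exp_bound (1 - \<beta>)"
  have C: "C > 0"
    using beta_lt_1 powr_exp_bound_pos[of "1 - \<beta>"] by (simp add: C_def)
  define m where "m = min (R 0 / 2) (c_lower * pl_mean \<beta> / (2 * C))"
  have "m \<le> c_lower * pl_mean \<beta> / (2 * C)"
    by (simp add: m_def)
  then have "C * m / pl_mean \<beta> \<le> c_lower / 2"
    using mean_pos C by (simp add: field_simps)
  then have m: "0 < m" "m < R 0" "C * m / pl_mean \<beta> < c_lower"
    using R_pos[of 0] c_lower_pos mean_pos C by (auto simp: m_def)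
  have "m < R t" if "t \<ge> 0" for t
  proof (rule continuous_strict_less_persists[OF continuous_on_const continuous_on_R m(2) _ that])
    fix t :: real
    assume t: "t \<ge> 0" and H: "\<forall>s\<in>{0..t}. m \<le> R s"
    have lr_risk: "\<forall>s\<in>{0..t}. 2 * m / pl_mean \<beta> \<le> gam s * R s"
    proof
      fix s
      assume s: "s \<in> {0..t}"
      have "2 / pl_mean \<beta> * m \<le> gam s * R s"
        using lr H s m mean_pos gam_pos[of s] by (intro mult_mono) auto
      then show "2 * m / pl_mean \<beta> \<le> gam s * R s"
        by simp
    qed
    have "c_lower * (1 + 2 * \<Gamma> t) powr (- p) + pl_mean \<beta> * (2 * m / pl_mean \<beta>) / 2
        - (1 - \<beta>) * (2 * m / pl_mean \<beta>) * powr_exp_bound (1 - \<beta>) * (1 + 2 * \<Gamma> t) powr (- (2 - \<beta>)) / 2 \<le> R t"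
      by (rule risk_ge_of_D_ge[OF t _ _ D_ge_of_lr_risk_ge[OF t _ lr_risk]])
        (use \<Gamma>_mono[of 0 t] t m mean_pos in auto)
    then have "c_lower * w t powr (- p) + m - C * m / pl_mean \<beta> * w t powr (- (2 - \<beta>)) \<le> R t"
      using mean_pos by (simp add: w_def C_def field_simps)
    moreover have "w t powr (- (2 - \<beta>)) \<le> w t powr (- p)"
      using w_ge_1[OF t] delta_nonneg by (intro powr_mono) (auto simp: p_def)
    then have "C * m / pl_mean \<beta> * w t powr (- (2 - \<beta>)) \<le> C * m / pl_mean \<beta> * w t powr (- p)"
      using C m mean_pos by (intro mult_left_mono) auto
    moreover have "C * m / pl_mean \<beta> * w t powr (- p) < c_lower * w t powr (- p)"
      using m(3) w_ge_1[OF t] by (intro mult_strict_right_mono) auto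
    ultimately show "m < R t"
      by linarith
  qed
  then show ?thesis
    using m(1) by blast
qed

text \<open>2 / c0 is the critical learning rate: if gam \<ge> 2 / c0 forever, the source term feeds back at
  least as much risk as it consumes, so R stays bounded below, whereas gam \<ge> 2 / c0 bounds
  Q and hence the cumulative risk S.\<close>
lemma lr_eventually_subcritical: "\<exists>T\<ge>0. gam T < 2 / pl_mean \<beta>"
proof (rule ccontr)
  assume "\<not> (\<exists>T\<ge>0. gam T < 2 / pl_mean \<beta>)"
  then have lr: "\<forall>t\<ge>0. 2 / pl_mean \<beta> \<le> gam t"
    by (auto simp: not_less)
  obtain m where m: "m > 0" "\<forall>t\<ge>0. m < R t"
    using risk_ge_const_of_lr_ge[OF lr] by blast
  define Smax where "Smax = (\<eta> / (2 / pl_mean \<beta>))\<^sup>2 / (2 * pl_mean \<beta>)"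
  define t where "t = Smax / m + 1"
  have "Smax \<ge> 0"
    using mean_pos by (simp add: Smax_def)
  then have t: "t \<ge> 0"
    using m by (simp add: t_def)
  have "(\<lambda>s. S s - m * s) 0 \<le> (\<lambda>s. S s - m * s) t"
  proof (rule DERIV_within_nonneg_imp_le[OF t])
    fix s
    assume "s \<in> {0..t}"
    then show "((\<lambda>s. S s - m * s) has_real_derivative R s - m) (at s within {0..t})"
      "0 \<le> R s - m"
      using m by (auto intro!: derivative_eq_intros S_has_derivative less_imp_le)
  qed
  then have "m * t \<le> Smax"
    using S_le_of_lr_ge[OF _ lr t] mean_pos by (simp add: Smax_def)
  moreover have "m * t = Smax + m"
    using m by (simp add: t_def field_simps)
  ultimately show False
    using m by linarith
qed

lemma w_powr_has_derivative:
  "0 \<le> t \<Longrightarrow> t \<le> T \<Longrightarrow> ((\<lambda>s. w s powr e) has_real_derivative e * w t powr (e - 1) * (2 * gam t)) (at t within {0..T})"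
  using w_ge_1[of t] by (intro DERIV_chain2[OF has_real_derivative_powr w_has_derivative]) auto

lemma I_le_of_risk_le:
  assumes t: "t \<ge> 0" and M: "M \<ge> 0" and H: "\<forall>s\<in>{0..t}. R s \<le> M * w s powr (- p)"
    and q: "0 < q" "q \<le> p" "q < 1"
  shows "I t \<le> \<eta> / b * M * w t powr (1 - q) / (2 * (1 - q))"
proof -
  define F where "F s = \<eta> / b * M * w s powr (1 - q) / (2 * (1 - q)) - I s" for s
  have "F 0 \<le> F t"
  proof (rule DERIV_within_nonneg_imp_le[OF t])
    fix s
    assume s: "s \<in> {0..t}"
    show "(F has_real_derivative \<eta> / b * M * ((1 - q) * w s powr (1 - q - 1) * (2 * gam s)) / (2 * (1 - q))
        - (gam s)\<^sup>2 * R s) (at s within {0..t})"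
      unfolding F_def using s
      by (intro DERIV_diff DERIV_cdivide DERIV_cmult w_powr_has_derivative I_has_derivative) auto
    have "gam s * R s \<le> \<eta> / b * (M * w s powr (- q))"
    proof (rule mult_mono)
      have "w s powr (- p) \<le> w s powr (- q)"
        using s w_ge_1[of s] q by (intro powr_mono) auto
      then have "M * w s powr (- p) \<le> M * w s powr (- q)"
        using M by (rule mult_left_mono)
      then show "R s \<le> M * w s powr (- q)"
        using H s by force
    qed (use s gam_le gam_pos R_nonneg b_pos eta_pos M in auto)
    then have "gam s * (gam s * R s) \<le> gam s * (\<eta> / b * (M * w s powr (- q)))"
      using gam_pos[of s] s by (intro mult_left_mono) auto
    moreover have "\<eta> / b * M * ((1 - q) * w s powr (1 - q - 1) * (2 * gam s)) / (2 * (1 - q))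
        = gam s * (\<eta> / b * (M * w s powr (- q)))"
      using q b_pos by (simp add: field_simps)
    ultimately show "0 \<le> \<eta> / b * M * ((1 - q) * w s powr (1 - q - 1) * (2 * gam s)) / (2 * (1 - q))
        - (gam s)\<^sup>2 * R s"
      by (simp add: power2_eq_square)
  qed
  moreover have "F 0 \<ge> 0"
    using eta_pos b_pos M q by (simp add: F_def)
  ultimately show ?thesis
    by (simp add: F_def)
qed

lemma I_mult_w_powr_le:
  assumes t: "t \<ge> 0" and M: "M \<ge> 0" and H: "\<forall>s\<in>{0..t}. R s \<le> M * w s powr (- p)"
    and q: "0 < q" "q \<le> p" "q < 1"
  shows "I t * w t powr (- (3 - \<beta>)) \<le> \<eta> / b / (2 * (1 - q)) * M * w t powr (- (\<delta> + q)) * w t powr (- p)"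
proof -
  have "I t * w t powr (- (3 - \<beta>)) \<le> \<eta> / b * M * w t powr (1 - q) / (2 * (1 - q)) * w t powr (- (3 - \<beta>))"
    using I_le_of_risk_le[OF assms] by (rule mult_right_mono) simp
  also have "\<dots> = \<eta> / b / (2 * (1 - q)) * M * (w t powr (1 - q) * w t powr (- (3 - \<beta>)))"
    by simp
  also have "w t powr (1 - q) * w t powr (- (3 - \<beta>)) = w t powr (- (\<delta> + q)) * w t powr (- p)"
    using w_ge_1[OF t] by (simp add: powr_add[symmetric] p_def algebra_simps)
  finally show ?thesis
    by (simp add: mult.assoc)
qed

lemma risk_le_of_lr_risk_le:
  assumes "0 \<le> s0" "s0 \<le> t" "Y \<ge> 0" and lr_risk: "\<forall>s\<in>{s0..t}. gam s * R s \<le> Y"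
  shows "R t \<le> C_init * w t powr (- p) + C_source * I t * (1 + 2 * (\<Gamma> t - \<Gamma> s0)) powr (- (3 - \<beta>))
    + pl_mean \<beta> * Y / 2"
proof -
  have "R t \<le> C_init * (1 + 2 * \<Gamma> t) powr (- p) + C_source * I t * (1 + 2 * (\<Gamma> t - \<Gamma> s0)) powr (- (3 - \<beta>))
      + pl_mean \<beta> * Y / 2"
  proof (rule risk_le_of_D_le)
    fix l :: real
    assume l: "l \<in> {0<..<1}"
    have "Y * (1 - exp (- (2 * (\<Gamma> t - \<Gamma> s0) * l))) \<le> Y"
      using assms(3) by (simp add: mult_left_le)
    then show "D l t \<le> A * l powr (- \<delta>) * exp (- (2 * \<Gamma> t * l)) + 2 * I t * l * exp (- (2 * (\<Gamma> t - \<Gamma> s0) * l)) + Y"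
      using D_le_split[OF assms(1,2) l lr_risk] by simp
  qed (use assms \<Gamma>_mono[of 0 t] \<Gamma>_mono[of s0 t] I_mono[of 0 t] in auto)
  then show ?thesis
    by (simp add: w_def)
qed

lemma lr_risk_le_of_risk_le:
  assumes "0 \<le> T1" "T1 \<le> s0" "s0 \<le> t" "M \<ge> 0" and H: "\<forall>s\<in>{0..t}. R s \<le> M * w s powr (- p)"
  shows "\<forall>s\<in>{s0..t}. gam s * R s \<le> gam T1 * M * w s0 powr (- p)"
proof
  fix s
  assume s: "s \<in> {s0..t}"
  have "w s powr (- p) \<le> w s0 powr (- p)"
    using s assms w_mono[of s0 s] w_ge_1[of s0] p_pos by (intro powr_mono2') auto
  then have "M * w s powr (- p) \<le> M * w s0 powr (- p)"
    using assms(4) by (rule mult_left_mono)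
  moreover have "R s \<le> M * w s powr (- p)"
    using H s assms by auto
  ultimately have "R s \<le> M * w s0 powr (- p)"
    by linarith
  then show "gam s * R s \<le> gam T1 * M * w s0 powr (- p)"
    using gam_antimono[of T1 s] gam_pos[of s] R_nonneg[of s] s assms by (simp add: mult.assoc mult_mono)
qed

text \<open>Split at the time s0 at which the fraction \<epsilon> of the effective time w t is still to come:
  the source emitted before s0 has decayed like (\<epsilon> w t) powr -(3 - \<beta>), and after T1 \<le> s0
  the source is weighted by the learning rate gam T1.\<close>
lemma risk_le_split:
  assumes "0 \<le> T1" "T1 \<le> s0" "s0 \<le> t" and \<epsilon>: "0 < \<epsilon>" "\<epsilon> < 1" and s0: "\<Gamma> s0 = (1 - \<epsilon>) * \<Gamma> t"
    and M: "M \<ge> 0" and H: "\<forall>s\<in>{0..t}. R s \<le> M * w s powr (- p)"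
  shows "R t \<le> C_init * w t powr (- p) + C_source * \<epsilon> powr (- (3 - \<beta>)) * (I t * w t powr (- (3 - \<beta>)))
    + pl_mean \<beta> * gam T1 / 2 * (1 - \<epsilon>) powr (- p) * M * w t powr (- p)"
proof -
  have t: "0 \<le> t" "0 \<le> s0" "\<Gamma> t \<ge> 0" and wt: "w t \<ge> 1"
    using assms \<Gamma>_mono[of 0 t] w_ge_1[of t] by auto
  define Y where "Y = gam T1 * M * w s0 powr (- p)"
  have lr_risk: "\<forall>s\<in>{s0..t}. gam s * R s \<le> Y"
    unfolding Y_def using assms(1-3) M H by (rule lr_risk_le_of_risk_le)
  have "0 < \<epsilon> * w t"
    using \<epsilon> wt by simp
  moreover have "\<epsilon> * w t \<le> 1 + 2 * (\<Gamma> t - \<Gamma> s0)"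
    using s0 \<epsilon> by (simp add: w_def algebra_simps)
  ultimately have "(1 + 2 * (\<Gamma> t - \<Gamma> s0)) powr (- (3 - \<beta>)) \<le> (\<epsilon> * w t) powr (- (3 - \<beta>))"
    using beta_lt_1 by (intro powr_mono2') auto
  also have "\<dots> = \<epsilon> powr (- (3 - \<beta>)) * w t powr (- (3 - \<beta>))"
    by (rule powr_mult)
  finally have "C_source * I t * (1 + 2 * (\<Gamma> t - \<Gamma> s0)) powr (- (3 - \<beta>))
      \<le> C_source * I t * (\<epsilon> powr (- (3 - \<beta>)) * w t powr (- (3 - \<beta>)))"
    using C_source_pos I_mono[of 0 t] t by (intro mult_left_mono) auto
  also have "\<dots> = C_source * \<epsilon> powr (- (3 - \<beta>)) * (I t * w t powr (- (3 - \<beta>)))"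
    by (simp only: ac_simps)
  finally have source: "C_source * I t * (1 + 2 * (\<Gamma> t - \<Gamma> s0)) powr (- (3 - \<beta>))
      \<le> C_source * \<epsilon> powr (- (3 - \<beta>)) * (I t * w t powr (- (3 - \<beta>)))" .
  have "0 < (1 - \<epsilon>) * w t"
    using \<epsilon> wt by simp
  moreover have "(1 - \<epsilon>) * w t \<le> w s0"
    using s0 \<epsilon> by (simp add: w_def algebra_simps)
  ultimately have "w s0 powr (- p) \<le> ((1 - \<epsilon>) * w t) powr (- p)"
    using p_pos by (intro powr_mono2') auto
  also have "\<dots> = (1 - \<epsilon>) powr (- p) * w t powr (- p)"
    by (rule powr_mult)
  finally have "pl_mean \<beta> * gam T1 / 2 * M * w s0 powr (- p)
      \<le> pl_mean \<beta> * gam T1 / 2 * M * ((1 - \<epsilon>) powr (- p) * w t powr (- p))"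
    using mean_pos gam_pos[of T1] assms(1) M by (intro mult_left_mono) auto
  moreover have "pl_mean \<beta> * Y / 2 = pl_mean \<beta> * gam T1 / 2 * M * w s0 powr (- p)"
    by (simp add: Y_def)
  moreover have "pl_mean \<beta> * gam T1 / 2 * M * ((1 - \<epsilon>) powr (- p) * w t powr (- p))
      = pl_mean \<beta> * gam T1 / 2 * (1 - \<epsilon>) powr (- p) * M * w t powr (- p)"
    by (simp only: ac_simps)
  moreover have "Y \<ge> 0"
    using gam_pos[of T1] assms(1) M by (simp add: Y_def)
  ultimately show ?thesis
    using risk_le_of_lr_risk_le[OF t(2) assms(3) _ lr_risk] source by linarith
qed

lemma risk_lt_w_powr_late:
  assumes T1: "0 \<le> T1" and \<epsilon>: "0 < \<epsilon>" "\<epsilon> < 1"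
    and \<theta>: "pl_mean \<beta> * gam T1 / 2 * (1 - \<epsilon>) powr (- p) = \<theta>" and q: "0 < q" "q \<le> p" "q < 1"
    and W: "\<And>x. x \<ge> W \<Longrightarrow> C_source * \<epsilon> powr (- (3 - \<beta>)) * (\<eta> / b / (2 * (1 - q))) * x powr (- (\<delta> + q))
      \<le> (1 - \<theta>) / 2"
    and M: "C_init < (1 - \<theta>) / 2 * M" "M \<ge> 0"
    and t: "t \<ge> 0" "W \<le> w t" "\<Gamma> T1 < (1 - \<epsilon>) * \<Gamma> t" and H: "\<forall>s\<in>{0..t}. R s \<le> M * w s powr (- p)"
  shows "R t < M * w t powr (- p)"
proof -
  obtain s0 where s0: "0 \<le> s0" "s0 \<le> t" "\<Gamma> s0 = (1 - \<epsilon>) * \<Gamma> t"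
    using IVT'[of \<Gamma> 0 "(1 - \<epsilon>) * \<Gamma> t" t] \<Gamma>_mono[of 0 t] t \<epsilon> continuous_on_\<Gamma>[of t]
    by (auto simp: mult_left_le_one_le)
  then have "T1 \<le> s0"
    using \<Gamma>_mono[of s0 T1] t(3) by (cases "T1 \<le> s0") auto
  have "C_source * \<epsilon> powr (- (3 - \<beta>)) * (I t * w t powr (- (3 - \<beta>)))
      \<le> C_source * \<epsilon> powr (- (3 - \<beta>)) * (\<eta> / b / (2 * (1 - q)) * M * w t powr (- (\<delta> + q)) * w t powr (- p))"
    using I_mult_w_powr_le[OF t(1) M(2) H q] C_source_pos by (intro mult_left_mono) auto
  also have "\<dots> = C_source * \<epsilon> powr (- (3 - \<beta>)) * (\<eta> / b / (2 * (1 - q))) * w t powr (- (\<delta> + q))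
      * M * w t powr (- p)"
    by (simp only: ac_simps)
  also have "\<dots> \<le> (1 - \<theta>) / 2 * M * w t powr (- p)"
    using W[OF t(2)] M(2) by (intro mult_right_mono) auto
  finally have "R t \<le> C_init * w t powr (- p) + (1 - \<theta>) / 2 * M * w t powr (- p) + \<theta> * M * w t powr (- p)"
    using risk_le_split[OF T1 \<open>T1 \<le> s0\<close> s0(2) \<epsilon> s0(3) M(2) H] unfolding \<theta> by linarith
  also have "\<dots> = (C_init + (1 - \<theta>) / 2 * M + \<theta> * M) * w t powr (- p)"
    by (simp only: distrib_right)
  also have "\<dots> < M * w t powr (- p)"
    using M(1) w_ge_1[OF t(1)] by (intro mult_strict_right_mono) (auto simp: field_simps)
  finally show ?thesis .
qed

text \<open>Choice of constants for the bootstrap: after a time T1 with subcritical learning rate, the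
  late source returns only the fraction \<theta> < 1 of the assumed bound, and q = min p (1/2) keeps
  I t = O(w t powr (1 - q)) (I_le_of_risk_le).\<close>
lemma risk_le_w_powr_step:
  "\<exists>G M0. M0 > 0 \<and> (\<forall>M t. M \<ge> M0 \<longrightarrow> t \<ge> 0 \<longrightarrow> G \<le> \<Gamma> t \<longrightarrow>
    (\<forall>s\<in>{0..t}. R s \<le> M * w s powr (- p)) \<longrightarrow> R t < M * w t powr (- p))"
proof -
  obtain T1 where T1: "T1 \<ge> 0" "gam T1 < 2 / pl_mean \<beta>"
    using lr_eventually_subcritical by blast
  have "0 \<le> pl_mean \<beta> * gam T1 / 2" "pl_mean \<beta> * gam T1 / 2 < 1"
    using T1 gam_pos[OF T1(1)] mean_pos by (auto simp: field_simps)
  then obtain \<epsilon> where \<epsilon>: "0 < \<epsilon>" "\<epsilon> < 1" "pl_mean \<beta> * gam T1 / 2 * (1 - \<epsilon>) powr (- p) < 1"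
    using ex_mult_powr_neg_lt_1 p_pos by blast
  define \<theta> where "\<theta> = pl_mean \<beta> * gam T1 / 2 * (1 - \<epsilon>) powr (- p)"
  define q where "q = min p (1 / 2)"
  have q: "0 < q" "q \<le> p" "q < 1"
    using p_pos by (auto simp: q_def)
  have "C_source * \<epsilon> powr (- (3 - \<beta>)) * (\<eta> / b / (2 * (1 - q))) > 0" "\<delta> + q > 0" "(1 - \<theta>) / 2 > 0"
    using C_source_pos eta_pos b_pos q \<epsilon> delta_nonneg by (auto simp: \<theta>_def)
  then obtain W where W: "\<And>x. x \<ge> W \<Longrightarrow> C_source * \<epsilon> powr (- (3 - \<beta>)) * (\<eta> / b / (2 * (1 - q)))
      * x powr (- (\<delta> + q)) \<le> (1 - \<theta>) / 2"
    using ex_mult_powr_neg_le by blast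
  define M0 where "M0 = 2 * C_init / (1 - \<theta>) + 1"
  have "0 < 2 * C_init / (1 - \<theta>)"
    using C_init_pos \<open>(1 - \<theta>) / 2 > 0\<close> by simp
  then have M0: "M0 > 0" "\<And>M. M \<ge> M0 \<Longrightarrow> C_init < (1 - \<theta>) / 2 * M"
    using \<open>(1 - \<theta>) / 2 > 0\<close> by (auto simp: M0_def field_simps)
  have "R t < M * w t powr (- p)"
    if "M \<ge> M0" "t \<ge> 0" "max ((W - 1) / 2) (\<Gamma> T1 / (1 - \<epsilon>) + 1) \<le> \<Gamma> t"
      "\<forall>s\<in>{0..t}. R s \<le> M * w s powr (- p)" for M t
  proof (rule risk_lt_w_powr_late[OF T1(1) \<epsilon>(1,2) \<theta>_def[symmetric] q W M0(2)[OF that(1)] _ that(2) _ _ that(4)])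
    show "M \<ge> 0"
      using that(1) M0(1) by simp
    show "W \<le> w t" "\<Gamma> T1 < (1 - \<epsilon>) * \<Gamma> t"
      using that(3) \<epsilon> by (auto simp: w_def field_simps)
  qed
  then show ?thesis
    using M0(1) by blast
qed

lemma risk_lt_w_powr_initial:
  assumes "T \<ge> 0"
  shows "\<exists>M0>0. \<forall>M\<ge>M0. \<forall>t\<in>{0..T}. R t < M * w t powr (- p)"
proof -
  obtain Rmax where Rmax: "\<forall>s\<in>{0..T}. R s \<le> Rmax"
    using continuous_attains_sup[OF compact_Icc _ continuous_on_R[of T]] assms by fastforce
  have "0 < R 0"
    by (rule R_pos) simp
  also have "R 0 \<le> Rmax"
    using Rmax assms by auto
  finally have Rmax_pos: "0 \<le> Rmax * w T powr p"
    by simp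
  define M0 where "M0 = Rmax * w T powr p + 1"
  have "R t < M * w t powr (- p)" if M: "M \<ge> M0" and t: "t \<in> {0..T}" for M t
  proof -
    have "w T powr p * w T powr (- p) = 1"
      using w_ge_1[OF assms] by (simp add: powr_minus)
    then have "R t \<le> Rmax * w T powr p * w T powr (- p)"
      using Rmax t by (simp add: mult.assoc)
    also have "\<dots> < M * w T powr (- p)"
      using M w_ge_1[OF assms] by (intro mult_strict_right_mono) (auto simp: M0_def)
    also have "\<dots> \<le> M * w t powr (- p)"
    proof (rule mult_left_mono)
      show "w T powr (- p) \<le> w t powr (- p)"
        using t w_mono[of t T] w_ge_1[of t] p_pos by (intro powr_mono2') auto
      show "0 \<le> M"
        using M Rmax_pos by (simp add: M0_def)
    qed
    finally show ?thesis .
  qed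
  moreover have "M0 > 0"
    using Rmax_pos by (simp add: M0_def)
  ultimately show ?thesis
    by blast
qed

lemma risk_le_w_powr: "\<exists>M>0. \<forall>t\<ge>0. R t \<le> M * w t powr (- p)"
proof -
  obtain G M0 where M0: "M0 > 0" and late: "\<forall>M t. M \<ge> M0 \<longrightarrow> t \<ge> 0 \<longrightarrow> G \<le> \<Gamma> t \<longrightarrow>
      (\<forall>s\<in>{0..t}. R s \<le> M * w s powr (- p)) \<longrightarrow> R t < M * w t powr (- p)"
    using risk_le_w_powr_step by blast
  obtain T where T: "T \<ge> 0" "G \<le> \<Gamma> T"
    using \<Gamma>_unbounded by blast
  obtain M1 where M1: "M1 > 0" "\<forall>M\<ge>M1. \<forall>t\<in>{0..T}. R t < M * w t powr (- p)"
    using risk_lt_w_powr_initial[OF T(1)] by blast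
  define M where "M = max M0 M1"
  have "R t < M * w t powr (- p)" if "t \<ge> 0" for t
  proof (rule continuous_strict_less_persists[OF continuous_on_R _ _ _ that])
    show "continuous_on {0..T'} (\<lambda>t. M * w t powr (- p))" for T'
      using w_ge_1 by (intro continuous_intros continuous_on_w) force
    have "M \<ge> M1"
      by (simp add: M_def)
    then show "R 0 < M * w 0 powr (- p)"
      using M1(2) T(1) by fastforce
    fix t :: real
    assume t: "t \<ge> 0" and H: "\<forall>s\<in>{0..t}. R s \<le> M * w s powr (- p)"
    show "R t < M * w t powr (- p)"
    proof (cases "t \<le> T")
      case True
      have "M \<ge> M1"
        by (simp add: M_def)
      then show ?thesis
        using M1(2) t True by simp
    next
      case False
      then have "G \<le> \<Gamma> t"
        using \<Gamma>_mono[of T t] T by simp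
      then show ?thesis
        using late t H by (simp add: M_def)
    qed
  qed
  then show ?thesis
    using M0 by (intro exI[of _ M]) (auto simp: M_def less_imp_le)
qed

section \<open>Comparison of Q, w and t, and the three regimes\<close>

text \<open>As w' = 2 gam = 2 \<eta> / Q, the equation Q' = c0 R / Q reads dQ / dw = c0 R / (2 \<eta>), and
  d G (w) / dt = 2 \<eta> g (w) / Q for G' = g: bounds on R in terms of w integrate to bounds on Q,
  and bounds on Q in terms of w integrate to bounds on w in terms of t.\<close>
lemma Q_le_of_antiderivative:
  assumes H: "\<And>x. x \<ge> 1 \<Longrightarrow> (H has_real_derivative h x) (at x)"
    and R_le: "\<And>s. s \<ge> 0 \<Longrightarrow> R s \<le> C * h (w s)" and "t \<ge> 0"
  shows "Q t \<le> b + pl_mean \<beta> * C / (2 * \<eta>) * (H (w t) - H 1)"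
proof -
  define k where "k = pl_mean \<beta> * C / (2 * \<eta>)"
  have "(\<lambda>s. Q s - k * H (w s)) t \<le> (\<lambda>s. Q s - k * H (w s)) 0"
  proof (rule DERIV_within_nonpos_imp_ge[OF assms(3)])
    fix s
    assume s: "s \<in> {0..t}"
    show "((\<lambda>s. Q s - k * H (w s)) has_real_derivative pl_mean \<beta> * R s / Q s - k * (h (w s) * (2 * gam s)))
        (at s within {0..t})"
      using s w_ge_1[of s] by (intro DERIV_diff Q_has_derivative DERIV_cmult DERIV_chain2[OF H w_has_derivative]) auto
    have "pl_mean \<beta> * R s / Q s - k * (h (w s) * (2 * gam s)) = pl_mean \<beta> * (R s - C * h (w s)) / Q s"
      using s eta_pos Q_pos[of s] by (simp add: k_def gam_eq field_simps)
    also have "\<dots> \<le> 0"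
      using R_le[of s] s mean_pos Q_pos[of s] by (simp add: divide_nonpos_pos mult_nonneg_nonpos)
    finally show "pl_mean \<beta> * R s / Q s - k * (h (w s) * (2 * gam s)) \<le> 0" .
  qed
  then have "Q t \<le> b + k * (H (w t) - H 1)"
    by (simp add: algebra_simps)
  then show ?thesis
    by (simp add: k_def)
qed

lemma Q_ge_of_antiderivative:
  assumes H: "\<And>x. x \<ge> 1 \<Longrightarrow> (H has_real_derivative h x) (at x)"
    and R_ge: "\<And>s. s \<ge> 0 \<Longrightarrow> c * h (w s) \<le> R s" and "t \<ge> 0"
  shows "b + pl_mean \<beta> * c / (2 * \<eta>) * (H (w t) - H 1) \<le> Q t"
proof -
  define k where "k = pl_mean \<beta> * c / (2 * \<eta>)"
  have "(\<lambda>s. Q s - k * H (w s)) 0 \<le> (\<lambda>s. Q s - k * H (w s)) t"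
  proof (rule DERIV_within_nonneg_imp_le[OF assms(3)])
    fix s
    assume s: "s \<in> {0..t}"
    show "((\<lambda>s. Q s - k * H (w s)) has_real_derivative pl_mean \<beta> * R s / Q s - k * (h (w s) * (2 * gam s)))
        (at s within {0..t})"
      using s w_ge_1[of s] by (intro DERIV_diff Q_has_derivative DERIV_cmult DERIV_chain2[OF H w_has_derivative]) auto
    have "pl_mean \<beta> * R s / Q s - k * (h (w s) * (2 * gam s)) = pl_mean \<beta> * (R s - c * h (w s)) / Q s"
      using s eta_pos Q_pos[of s] by (simp add: k_def gam_eq field_simps)
    also have "\<dots> \<ge> 0"
      using R_ge[of s] s mean_pos Q_pos[of s] by simp
    finally show "0 \<le> pl_mean \<beta> * R s / Q s - k * (h (w s) * (2 * gam s))" .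
  qed
  then have "b + k * (H (w t) - H 1) \<le> Q t"
    by (simp add: algebra_simps)
  then show ?thesis
    by (simp add: k_def)
qed

lemma antiderivative_w_ge:
  assumes G: "\<And>x. x \<ge> 1 \<Longrightarrow> (G has_real_derivative g x) (at x)"
    and Q_le: "\<And>s. s \<ge> 0 \<Longrightarrow> Q s \<le> K * g (w s)" and "K > 0" "t \<ge> 0"
  shows "2 * \<eta> / K * t \<le> G (w t) - G 1"
proof -
  have "(\<lambda>s. G (w s) - 2 * \<eta> / K * s) 0 \<le> (\<lambda>s. G (w s) - 2 * \<eta> / K * s) t"
  proof (rule DERIV_within_nonneg_imp_le[OF assms(4)])
    fix s
    assume s: "s \<in> {0..t}"
    show "((\<lambda>s. G (w s) - 2 * \<eta> / K * s) has_real_derivative g (w s) * (2 * gam s) - 2 * \<eta> / K * 1)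
        (at s within {0..t})"
      using s w_ge_1[of s] by (intro DERIV_diff DERIV_chain2[OF G w_has_derivative] DERIV_cmult DERIV_ident) auto
    have "2 * \<eta> / K \<le> g (w s) * (2 * gam s)"
      using Q_le[of s] s Q_pos[of s] eta_pos assms(3) by (simp add: gam_eq field_simps)
    then show "0 \<le> g (w s) * (2 * gam s) - 2 * \<eta> / K * 1"
      by simp
  qed
  then show ?thesis
    by simp
qed

lemma antiderivative_w_le:
  assumes G: "\<And>x. x \<ge> 1 \<Longrightarrow> (G has_real_derivative g x) (at x)"
    and Q_ge: "\<And>s. s \<ge> 0 \<Longrightarrow> k * g (w s) \<le> Q s" and "k > 0" "t \<ge> 0"
  shows "G (w t) - G 1 \<le> 2 * \<eta> / k * t"
proof -
  have "(\<lambda>s. G (w s) - 2 * \<eta> / k * s) t \<le> (\<lambda>s. G (w s) - 2 * \<eta> / k * s) 0"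
  proof (rule DERIV_within_nonpos_imp_ge[OF assms(4)])
    fix s
    assume s: "s \<in> {0..t}"
    show "((\<lambda>s. G (w s) - 2 * \<eta> / k * s) has_real_derivative g (w s) * (2 * gam s) - 2 * \<eta> / k * 1)
        (at s within {0..t})"
      using s w_ge_1[of s] by (intro DERIV_diff DERIV_chain2[OF G w_has_derivative] DERIV_cmult DERIV_ident) auto
    have "g (w s) * (2 * gam s) \<le> 2 * \<eta> / k"
      using Q_ge[of s] s Q_pos[of s] eta_pos assms(3) by (simp add: gam_eq field_simps)
    then show "g (w s) * (2 * gam s) - 2 * \<eta> / k * 1 \<le> 0"
      by simp
  qed
  then show ?thesis
    by simp
qed

lemma w_le_linear: "t \<ge> 0 \<Longrightarrow> w t \<le> 1 + 2 * \<eta> / b * t"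
  using antiderivative_w_le[where G="\<lambda>x. x" and g="\<lambda>_. 1" and k=b] Q_ge_b b_pos
  by (force intro: DERIV_ident)

lemma asymp_risk_w: "asymp_ge1 R (\<lambda>t. w t powr (- p))"
proof -
  obtain M where "M > 0" "\<forall>t\<ge>0. R t \<le> M * w t powr (- p)"
    using risk_le_w_powr by blast
  then show ?thesis
    using risk_lower c_lower_pos by (intro asymp_ge1I[of c_lower M]) auto
qed

lemma asymp_gam_Q_inverse: "asymp_ge1 gam (\<lambda>t. Q t powr (- 1))"
proof (rule asymp_ge1_cong[THEN iffD1, OF _ _ asymp_ge1_const_mult[OF eta_pos]])
  fix t :: real
  assume "t \<ge> 1"
  then show "\<eta> * Q t powr (- 1) = gam t"
    using Q_pos[of t] by (simp add: gam_eq powr_minus divide_inverse)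
qed simp

context
  assumes below_1: "\<beta> + \<delta> < 1"
begin

lemma Q_bounded: "\<exists>K>0. \<forall>t\<ge>0. Q t \<le> K"
proof -
  have p: "p > 1"
    using below_1 by (simp add: p_def)
  obtain M where M: "M > 0" "\<forall>t\<ge>0. R t \<le> M * w t powr (- p)"
    using risk_le_w_powr by blast
  define K where "K = b + pl_mean \<beta> * M / (2 * \<eta>) / (p - 1)"
  have "Q t \<le> K" if "t \<ge> 0" for t
  proof -
    have "Q t \<le> b + pl_mean \<beta> * M / (2 * \<eta>) * (w t powr (1 - p) / (1 - p) - 1 powr (1 - p) / (1 - p))"
      using M(2) p that powr_antiderivative[of "1 - p"]
      by (intro Q_le_of_antiderivative[where h="\<lambda>x. x powr (- p)"]) auto
    also have "w t powr (1 - p) / (1 - p) - 1 powr (1 - p) / (1 - p) = (1 - w t powr (1 - p)) / (p - 1)"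
      by (metis diff_divide_distrib minus_diff_eq minus_divide_divide powr_one_eq_one)
    also have "pl_mean \<beta> * M / (2 * \<eta>) * ((1 - w t powr (1 - p)) / (p - 1))
        \<le> pl_mean \<beta> * M / (2 * \<eta>) * (1 / (p - 1))"
      using p mean_pos M(1) eta_pos by (intro mult_left_mono divide_right_mono) auto
    finally show ?thesis
      by (simp add: K_def)
  qed
  moreover have "K > 0"
    using b_pos mean_pos M eta_pos p by (simp add: K_def add_pos_nonneg)
  ultimately show ?thesis
    by blast
qed

lemma regime_below_1_lr: "\<exists>g>0. \<forall>t\<ge>0. g \<le> gam t"
proof -
  obtain K where "K > 0" "\<forall>t\<ge>0. Q t \<le> K"
    using Q_bounded by blast
  then have "\<eta> / K \<le> gam t" if "t \<ge> 0" for t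
    unfolding gam_eq[OF that] using Q_pos[OF that] eta_pos that by (intro frac_le) auto
  then show ?thesis
    using \<open>K > 0\<close> eta_pos by (intro exI[of _ "\<eta> / K"]) auto
qed

lemma regime_below_1_risk: "asymp_ge1 R (\<lambda>t. t powr (\<beta> + \<delta> - 2))"
proof -
  obtain K where K: "K > 0" "\<forall>t\<ge>0. Q t \<le> K * 1"
    using Q_bounded by auto
  have "asymp_ge1 w (\<lambda>t. t)"
  proof (rule asymp_ge1I[of "2 * \<eta> / K" "1 + 2 * \<eta> / b"])
    fix t :: real
    assume "t \<ge> 1"
    have "2 * \<eta> / K * t \<le> w t - 1"
      by (rule antiderivative_w_ge[where G="\<lambda>x. x" and g="\<lambda>_. 1"]) (use K \<open>t \<ge> 1\<close> in auto)
    then show "2 * \<eta> / K * t \<le> w t"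
      by simp
    show "w t \<le> (1 + 2 * \<eta> / b) * t"
      using w_le_linear[of t] \<open>t \<ge> 1\<close> by (simp add: algebra_simps)
  qed (use K eta_pos b_pos in \<open>simp_all add: add_pos_pos\<close>)
  then have "asymp_ge1 (\<lambda>t. w t powr (- p)) (\<lambda>t. t powr (- p))"
    by (rule asymp_ge1_powr) auto
  then show ?thesis
    using asymp_ge1_trans[OF asymp_risk_w] by (simp add: p_def)
qed

end

context
  assumes between_1_and_2: "1 < \<beta> + \<delta>"
begin

lemma p_lt_1: "p < 1"
  using between_1_and_2 by (simp add: p_def)

lemma Q_two_sided_powr:
  obtains k K where "0 < k" "0 < K" "\<And>t. t \<ge> 0 \<Longrightarrow> k * w t powr (1 - p) \<le> Q t"
    "\<And>t. t \<ge> 0 \<Longrightarrow> Q t \<le> K * w t powr (1 - p)"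
proof -
  obtain M where M: "M > 0" "\<forall>t\<ge>0. R t \<le> M * w t powr (- p)"
    using risk_le_w_powr by blast
  have H: "\<And>x. x \<ge> 1 \<Longrightarrow> ((\<lambda>x. x powr (1 - p) / (1 - p)) has_real_derivative x powr (- p)) (at x)"
    using powr_antiderivative[of "1 - p"] p_lt_1 by simp
  define KU where "KU = pl_mean \<beta> * M / (2 * \<eta>) / (1 - p)"
  define kL where "kL = pl_mean \<beta> * c_lower / (2 * \<eta>) / (1 - p)"
  have "0 < min b kL" "0 < max b KU"
    using b_pos mean_pos M c_lower_pos eta_pos p_lt_1 by (auto simp: KU_def kL_def)
  moreover have "Q t \<le> max b KU * w t powr (1 - p)" if t: "t \<ge> 0" for t
  proof -
    have "Q t \<le> b + pl_mean \<beta> * M / (2 * \<eta>) * (w t powr (1 - p) / (1 - p) - 1 powr (1 - p) / (1 - p))"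
      using M(2) t by (intro Q_le_of_antiderivative[OF H]) auto
    also have "\<dots> = b + KU * (w t powr (1 - p) - 1)"
      by (simp add: KU_def diff_divide_distrib[symmetric])
    also have "\<dots> \<le> max b KU * (1 + (w t powr (1 - p) - 1))"
      using w_ge_1[OF t] p_lt_1 by (intro affine_le_max_mult) (simp add: ge_one_powr_ge_zero)
    finally show ?thesis
      by simp
  qed
  moreover have "min b kL * w t powr (1 - p) \<le> Q t" if t: "t \<ge> 0" for t
  proof -
    have "min b kL * (1 + (w t powr (1 - p) - 1)) \<le> b + kL * (w t powr (1 - p) - 1)"
      using w_ge_1[OF t] p_lt_1 by (intro min_mult_le_affine) (simp add: ge_one_powr_ge_zero)
    also have "\<dots> = b + pl_mean \<beta> * c_lower / (2 * \<eta>) * (w t powr (1 - p) / (1 - p) - 1 powr (1 - p) / (1 - p))"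
      by (simp add: kL_def diff_divide_distrib[symmetric])
    also have "\<dots> \<le> Q t"
      using risk_lower t by (intro Q_ge_of_antiderivative[OF H]) auto
    finally show ?thesis
      by simp
  qed
  ultimately show ?thesis
    using that by blast
qed

lemma asymp_w_between: "asymp_ge1 w (\<lambda>t. t powr (1 / (\<beta> + \<delta>)))"
proof -
  define \<alpha> where "\<alpha> = \<beta> + \<delta>"
  have \<alpha>: "1 < \<alpha>" "1 - p = \<alpha> - 1"
    using between_1_and_2 by (auto simp: p_def \<alpha>_def)
  obtain k K where k: "0 < k" "0 < K" "\<And>t. t \<ge> 0 \<Longrightarrow> k * w t powr (1 - p) \<le> Q t"
    "\<And>t. t \<ge> 0 \<Longrightarrow> Q t \<le> K * w t powr (1 - p)"
    using Q_two_sided_powr by blast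
  have G: "((\<lambda>x. x powr \<alpha> / \<alpha>) has_real_derivative x powr (1 - p)) (at x)" if "x \<ge> 1" for x
    unfolding \<alpha>(2) using powr_antiderivative[of \<alpha> x] that \<alpha>(1) by simp
  have "asymp_ge1 (\<lambda>t. w t powr \<alpha>) (\<lambda>t. t)"
  proof (rule asymp_ge1I[of "\<alpha> * (2 * \<eta> / K)" "1 + \<alpha> * (2 * \<eta> / k)"])
    fix t :: real
    assume t: "t \<ge> 1"
    have "2 * \<eta> / K * t \<le> w t powr \<alpha> / \<alpha> - 1 powr \<alpha> / \<alpha>"
      using k t by (intro antiderivative_w_ge[OF G]) auto
    then show "\<alpha> * (2 * \<eta> / K) * t \<le> w t powr \<alpha>"
      using \<alpha> by (simp add: field_simps)
    have "w t powr \<alpha> / \<alpha> - 1 powr \<alpha> / \<alpha> \<le> 2 * \<eta> / k * t"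
      using k t by (intro antiderivative_w_le[OF G]) auto
    then show "w t powr \<alpha> \<le> (1 + \<alpha> * (2 * \<eta> / k)) * t"
      using \<alpha> t by (simp add: field_simps)
  qed (use \<alpha> k eta_pos in \<open>simp_all add: add_pos_pos\<close>)
  then have "asymp_ge1 (\<lambda>t. (w t powr \<alpha>) powr (1 / \<alpha>)) (\<lambda>t. t powr (1 / \<alpha>))"
    by (rule asymp_ge1_powr) auto
  moreover have "(w t powr \<alpha>) powr (1 / \<alpha>) = w t" if "t \<ge> 1" for t
    using w_ge_1[of t] that \<alpha> by (simp add: powr_powr)
  ultimately show ?thesis
    unfolding \<alpha>_def by (subst (asm) asymp_ge1_cong[of _ w _ "\<lambda>t. t powr (1 / (\<beta> + \<delta>))"]) auto
qed

lemma regime_between_lr: "asymp_ge1 gam (\<lambda>t. t powr (- 1 + 1 / (\<beta> + \<delta>)))"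
proof -
  obtain k K where k: "0 < k" "0 < K" "\<And>t. t \<ge> 0 \<Longrightarrow> k * w t powr (1 - p) \<le> Q t"
    "\<And>t. t \<ge> 0 \<Longrightarrow> Q t \<le> K * w t powr (1 - p)"
    using Q_two_sided_powr by blast
  have "asymp_ge1 Q (\<lambda>t. w t powr (1 - p))"
    using k by (intro asymp_ge1I[of k K]) auto
  also have "asymp_ge1 (\<lambda>t. w t powr (1 - p)) (\<lambda>t. (t powr (1 / (\<beta> + \<delta>))) powr (1 - p))"
    using asymp_w_between by (rule asymp_ge1_powr) auto
  finally have "asymp_ge1 (\<lambda>t. Q t powr (- 1)) (\<lambda>t. ((t powr (1 / (\<beta> + \<delta>))) powr (1 - p)) powr (- 1))"
    by (rule asymp_ge1_powr) auto
  moreover have "1 / (\<beta> + \<delta>) * (1 - p) * - 1 = - 1 + 1 / (\<beta> + \<delta>)"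
    using between_1_and_2 by (simp add: p_def field_simps)
  ultimately show ?thesis
    using asymp_ge1_trans[OF asymp_gam_Q_inverse] by (simp only: powr_powr)
qed

lemma regime_between_risk: "asymp_ge1 R (\<lambda>t. t powr (- 2 / (\<beta> + \<delta>) + 1))"
proof -
  have "asymp_ge1 (\<lambda>t. w t powr (- p)) (\<lambda>t. (t powr (1 / (\<beta> + \<delta>))) powr (- p))"
    using asymp_w_between by (rule asymp_ge1_powr) auto
  moreover have "1 / (\<beta> + \<delta>) * - p = - 2 / (\<beta> + \<delta>) + 1"
    using between_1_and_2 by (simp add: p_def field_simps)
  ultimately show ?thesis
    using asymp_ge1_trans[OF asymp_risk_w] by (simp only: powr_powr)
qed

end

lemma asymp_ln_w:
  assumes "\<And>t. t \<ge> 0 \<Longrightarrow> c * t \<le> w t * ln (w t)" "c > 0"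
  shows "asymp_ge1 (\<lambda>t. ln (w t)) (\<lambda>t. ln (t + 1))"
proof -
  have "w 1 > 1"
    using assms(1)[of 1] assms(2) w_ge_1[of 1] by (cases "w 1 = 1") auto
  define C where "C = 2 + (ln 2 + \<bar>ln c\<bar>) / ln (w 1)"
  have C: "C > 0"
    using \<open>w 1 > 1\<close> by (simp add: C_def add_pos_nonneg)
  show ?thesis
  proof (rule asymp_ge1I[of "1 / C" "ln (1 + 2 * \<eta> / b) / ln 2 + 1"])
    fix t :: real
    assume t: "t \<ge> 1"
    have "ln (t + 1) \<le> C * ln (w t)"
      unfolding C_def using assms \<open>w 1 > 1\<close> w_mono[of 1 t] t by (intro ln_add_one_le_mult_ln) auto
    then show "1 / C * ln (t + 1) \<le> ln (w t)"
      using C by (simp add: field_simps)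
    have "(1 + 2 * \<eta> / b) * (t + 1) = 1 + 2 * \<eta> / b * t + (t + 2 * \<eta> / b)"
      using b_pos by (simp add: field_simps)
    moreover have "0 \<le> t + 2 * \<eta> / b"
      using t eta_pos b_pos by simp
    ultimately have "w t \<le> (1 + 2 * \<eta> / b) * (t + 1)"
      using w_le_linear[of t] t by linarith
    moreover have "0 < 1 + 2 * \<eta> / b" "0 < t + 1" "0 < w t"
      using eta_pos b_pos t w_ge_1[of t] by (simp_all add: add_pos_pos)
    ultimately have "ln (w t) \<le> ln ((1 + 2 * \<eta> / b) * (t + 1))"
      by simp
    also have "\<dots> = ln (1 + 2 * \<eta> / b) + ln (t + 1)"
      using \<open>0 < 1 + 2 * \<eta> / b\<close> \<open>0 < t + 1\<close> by (simp add: ln_mult)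
    also have "ln (1 + 2 * \<eta> / b) \<le> ln (1 + 2 * \<eta> / b) / ln 2 * ln (t + 1)"
      using t eta_pos b_pos by (simp add: field_simps mult_left_mono)
    finally show "ln (w t) \<le> (ln (1 + 2 * \<eta> / b) / ln 2 + 1) * ln (t + 1)"
      by (simp add: algebra_simps)
  qed (use C eta_pos b_pos in \<open>simp_all add: add_pos_nonneg\<close>)
qed

context
  assumes critical: "\<beta> + \<delta> = 1"
begin

lemma p_eq_1: "p = 1"
  using critical by (simp add: p_def)

lemma Q_two_sided_ln:
  obtains k K where "0 < k" "0 < K" "\<And>t. t \<ge> 0 \<Longrightarrow> k * (1 + ln (w t)) \<le> Q t"
    "\<And>t. t \<ge> 0 \<Longrightarrow> Q t \<le> K * (1 + ln (w t))"
proof -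
  obtain M where M: "M > 0" "\<forall>t\<ge>0. R t \<le> M * w t powr (- p)"
    using risk_le_w_powr by blast
  have H: "\<And>x. x \<ge> 1 \<Longrightarrow> (ln has_real_derivative x powr (- p)) (at x)"
    using p_eq_1 by (auto intro!: derivative_eq_intros simp: divide_inverse)
  define KU where "KU = pl_mean \<beta> * M / (2 * \<eta>)"
  define kL where "kL = pl_mean \<beta> * c_lower / (2 * \<eta>)"
  have "0 < min b kL" "0 < max b KU"
    using b_pos mean_pos M c_lower_pos eta_pos by (auto simp: KU_def kL_def)
  moreover have "Q t \<le> max b KU * (1 + ln (w t))" if t: "t \<ge> 0" for t
  proof -
    have "Q t \<le> b + KU * (ln (w t) - ln 1)"
      unfolding KU_def using M(2) t by (intro Q_le_of_antiderivative[OF H]) auto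
    also have "\<dots> \<le> max b KU * (1 + ln (w t))"
      using w_ge_1[OF t] by (simp add: affine_le_max_mult)
    finally show ?thesis .
  qed
  moreover have "min b kL * (1 + ln (w t)) \<le> Q t" if t: "t \<ge> 0" for t
  proof -
    have "min b kL * (1 + ln (w t)) \<le> b + kL * (ln (w t) - ln 1)"
      using w_ge_1[OF t] by (simp add: min_mult_le_affine)
    also have "\<dots> \<le> Q t"
      unfolding kL_def using risk_lower t by (intro Q_ge_of_antiderivative[OF H]) auto
    finally show ?thesis .
  qed
  ultimately show ?thesis
    using that by blast
qed

lemma w_ln_w_two_sided:
  "\<exists>c C. 0 < c \<and> 0 < C \<and> (\<forall>t\<ge>0. c * t \<le> w t * ln (w t) \<and> w t * ln (w t) \<le> C * t)"
proof -
  obtain k K where k: "0 < k" "0 < K" "\<And>t. t \<ge> 0 \<Longrightarrow> k * (1 + ln (w t)) \<le> Q t"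
    "\<And>t. t \<ge> 0 \<Longrightarrow> Q t \<le> K * (1 + ln (w t))"
    using Q_two_sided_ln by blast
  have "2 * \<eta> / K * t \<le> w t * ln (w t)" "w t * ln (w t) \<le> 2 * \<eta> / k * t" if "t \<ge> 0" for t
    using antiderivative_w_ge[OF x_ln_x_derivative k(4) k(2) that]
      antiderivative_w_le[OF x_ln_x_derivative k(3) k(1) that] by simp_all
  then show ?thesis
    using k eta_pos by (intro exI[of _ "2 * \<eta> / K"] exI[of _ "2 * \<eta> / k"]) auto
qed

lemma ln_w_pos: "t \<ge> 1 \<Longrightarrow> ln (w t) > 0"
proof -
  assume t: "t \<ge> 1"
  obtain c where c: "0 < c" "\<forall>t\<ge>0. c * t \<le> w t * ln (w t)"
    using w_ln_w_two_sided by blast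
  have "0 < c * t"
    using c(1) t by simp
  also have "c * t \<le> w t * ln (w t)"
    using c(2) t by simp
  finally have "0 < w t * ln (w t)" .
  then show ?thesis
    using w_ge_1[of t] t by (simp add: zero_less_mult_iff)
qed

lemma asymp_w_ln_w: "asymp_ge1 (\<lambda>t. w t * ln (w t)) (\<lambda>t. t)"
proof -
  obtain c C where "0 < c" "0 < C" "\<forall>t\<ge>0. c * t \<le> w t * ln (w t) \<and> w t * ln (w t) \<le> C * t"
    using w_ln_w_two_sided by blast
  then show ?thesis
    by (intro asymp_ge1I[of c C]) auto
qed

lemma asymp_ln_w_critical: "asymp_ge1 (\<lambda>t. ln (w t)) (\<lambda>t. ln (t + 1))"
  using w_ln_w_two_sided asymp_ln_w by blast

lemma regime_critical_risk: "asymp_ge1 R (\<lambda>t. inverse (t / ln (t + 1)))"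
proof -
  have "asymp_ge1 (\<lambda>t. w t * ln (w t) * ln (w t) powr (- 1)) (\<lambda>t. t * ln (t + 1) powr (- 1))"
    using asymp_w_ln_w asymp_ge1_powr[OF asymp_ln_w_critical] by (rule asymp_ge1_mult) auto
  moreover have "w t * ln (w t) * ln (w t) powr (- 1) = w t" "t * ln (t + 1) powr (- 1) = t / ln (t + 1)"
    if "t \<ge> 1" for t
    using ln_w_pos[OF that] ln_gt_zero[of "t + 1"] that by (simp_all add: abs_of_pos)
  ultimately have "asymp_ge1 w (\<lambda>t. t / ln (t + 1))"
    by (subst (asm) asymp_ge1_cong[of _ w _ "\<lambda>t. t / ln (t + 1)"]) auto
  then have "asymp_ge1 (\<lambda>t. w t powr (- 1)) (\<lambda>t. (t / ln (t + 1)) powr (- 1))"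
    by (rule asymp_ge1_powr) (simp add: ln_gt_zero)
  with asymp_risk_w[unfolded p_eq_1] have "asymp_ge1 R (\<lambda>t. (t / ln (t + 1)) powr (- 1))"
    by (rule asymp_ge1_trans)
  moreover have "(t / ln (t + 1)) powr (- 1) = inverse (t / ln (t + 1))" if "t \<ge> 1" for t :: real
    using ln_gt_zero[of "t + 1"] that by (simp add: abs_of_pos)
  ultimately show ?thesis
    by (subst (asm) asymp_ge1_cong[of R R]) auto
qed

lemma regime_critical_lr: "asymp_ge1 gam (\<lambda>t. 1 / ln (t + 1))"
proof -
  obtain k K where k: "0 < k" "0 < K" "\<And>t. t \<ge> 0 \<Longrightarrow> k * (1 + ln (w t)) \<le> Q t"
    "\<And>t. t \<ge> 0 \<Longrightarrow> Q t \<le> K * (1 + ln (w t))"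
    using Q_two_sided_ln by blast
  have "asymp_ge1 Q (\<lambda>t. 1 + ln (w t))"
    using k by (intro asymp_ge1I[of k K]) auto
  also have "asymp_ge1 (\<lambda>t. 1 + ln (w t)) (\<lambda>t. ln (w t))"
  proof (rule asymp_ge1I[of 1 "1 / ln (w 1) + 1"])
    fix t :: real
    assume t: "t \<ge> 1"
    have "1 \<le> ln (w t) / ln (w 1)"
      using ln_w_pos[of 1] w_mono[of 1 t] w_ge_1[of 1] t by (simp add: field_simps)
    then show "1 + ln (w t) \<le> (1 / ln (w 1) + 1) * ln (w t)"
      using ln_w_pos[of 1] by (simp add: field_simps)
  qed (use ln_w_pos in \<open>auto simp: add_pos_pos\<close>)
  also note asymp_ln_w_critical
  finally have "asymp_ge1 (\<lambda>t. Q t powr (- 1)) (\<lambda>t. ln (t + 1) powr (- 1))"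
    by (rule asymp_ge1_powr) auto
  then have "asymp_ge1 gam (\<lambda>t. ln (t + 1) powr (- 1))"
    by (rule asymp_ge1_trans[OF asymp_gam_Q_inverse])
  moreover have "ln (t + 1) powr (- 1) = 1 / ln (t + 1)" if "t \<ge> 1" for t :: real
    using ln_gt_zero[of "t + 1"] that by simp
  ultimately show ?thesis
    by (subst (asm) asymp_ge1_cong[of gam gam]) auto
qed

end

end

theorem proposition5:
  fixes \<beta> \<delta> b \<eta> a A :: real
    and D :: "real \<Rightarrow> real \<Rightarrow> real" and R gam :: "real \<Rightarrow> real"
  assumes "\<beta> < 1" and "\<delta> \<ge> 0" and "b > 0" and "\<eta> > 0"
    and "a > 0" and "A > 0"
    and "\<forall>l\<in>{0<..<1}. a * l powr (- \<delta>) \<le> D l 0 \<and> D l 0 \<le> A * l powr (- \<delta>)"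
    and "adagrad_norm_ls_dynamics \<beta> b \<eta> D R gam"
  shows "(\<beta> + \<delta> < 1 \<longrightarrow>
            (\<exists>g. g > 0 \<and> (\<forall>t\<ge>0. gam t \<ge> g)) \<and>
            asymp_ge1 R (\<lambda>t. t powr (\<beta> + \<delta> - 2)))
       \<and> (1 < \<beta> + \<delta> \<and> \<beta> + \<delta> < 2 \<longrightarrow>
            asymp_ge1 gam (\<lambda>t. t powr (- 1 + 1 / (\<beta> + \<delta>))) \<and>
            asymp_ge1 R (\<lambda>t. t powr (- 2 / (\<beta> + \<delta>) + 1)))
       \<and> (\<beta> + \<delta> = 1 \<longrightarrow>
            asymp_ge1 gam (\<lambda>t. 1 / ln (t + 1)) \<and>
            asymp_ge1 R (\<lambda>t. inverse (t / ln (t + 1))))"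
proof -
  have setting: "adagrad_norm_ls \<beta> \<delta> b \<eta> a A D R gam" if "\<beta> + \<delta> < 2"
    using assms that by unfold_locales auto
  show ?thesis
    using adagrad_norm_ls.regime_below_1_lr[OF setting] adagrad_norm_ls.regime_below_1_risk[OF setting]
      adagrad_norm_ls.regime_between_lr[OF setting] adagrad_norm_ls.regime_between_risk[OF setting]
      adagrad_norm_ls.regime_critical_lr[OF setting] adagrad_norm_ls.regime_critical_risk[OF setting]
    by auto
qed

end
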